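(* Let $\alpha>0$ and let $\varphi\ge0$ be a measurable function on $\mathbb{C}$ satisfying condition $(I_1)$. Then $T_\varphi$ is compact on $F^\infty_\alpha$ if and only if $\tilde{\varphi}_t\in C_0(\mathbb{C})$ for every $t>0$.
   Context: $d\lambda_\alpha(w)=\frac{\alpha}{\pi}e^{-\alpha|w|^2}dA(w)$, $K_z(w)=e^{\alpha\bar z w}$. $\varphi$ satisfies condition $(I_1)$ if $\int_{\mathbb{C}}|\varphi(w)||K_z(w)|^2\,d\lambda_\alpha(w)<\infty$ for all $z$. $F^\infty_\alpha$ is the space of entire $f$ with $\|f\|_{\infty,\alpha}=\sup_z|f(z)|e^{-\alpha|z|^2/2}<\infty$. $T_\varphi f(z)=\int_{\mathbb{C}}\varphi(w)f(w)\overline{K_z(w)}\,d\lambda_\alpha(w)$. $\tilde{\varphi}_t(z)=\frac{\alpha}{\pi}\int_{\mathbb{C}}\varphi(w)e^{-\alpha t|z-w|^2/2}\,dA(w)$. $C_0(\mathbb{C})$ is the space of continuous functions vanishing at infinity. *)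

theory Defs
  imports "HOL-Analysis.Analysis"
begin

(* Fock weight: the Gaussian measure d lambda_alpha = (alpha/pi) e^{-alpha |w|^2} dA(w),
   written as a density against Lebesgue measure dA on C. *)
definition gauss_dens :: "real \<Rightarrow> complex \<Rightarrow> real" where
  "gauss_dens \<alpha> w = (\<alpha> / pi) * exp (- \<alpha> * (cmod w)\<^sup>2)"

definition fock_kernel :: "real \<Rightarrow> complex \<Rightarrow> complex \<Rightarrow> complex" where
  "fock_kernel \<alpha> z w = exp (complex_of_real \<alpha> * cnj z * w)"

definition cond_I1 :: "real \<Rightarrow> (complex \<Rightarrow> real) \<Rightarrow> bool" where
  "cond_I1 \<alpha> \<phi> \<longleftrightarrow> (\<forall>z. integrable lebesgue
      (\<lambda>w. \<bar>\<phi> w\<bar> * (cmod (fock_kernel \<alpha> z w))\<^sup>2 * gauss_dens \<alpha> w))"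

definition fock_inf :: "real \<Rightarrow> (complex \<Rightarrow> complex) set" where
  "fock_inf \<alpha> = {f. f holomorphic_on UNIV \<and>
      bdd_above (range (\<lambda>z. cmod (f z) * exp (- \<alpha> * (cmod z)\<^sup>2 / 2)))}"

definition fock_inf_norm :: "real \<Rightarrow> (complex \<Rightarrow> complex) \<Rightarrow> real" where
  "fock_inf_norm \<alpha> f = (SUP z. cmod (f z) * exp (- \<alpha> * (cmod z)\<^sup>2 / 2))"

definition toeplitz :: "real \<Rightarrow> (complex \<Rightarrow> real) \<Rightarrow> (complex \<Rightarrow> complex) \<Rightarrow> complex \<Rightarrow> complex" where
  "toeplitz \<alpha> \<phi> f z = integral\<^sup>L lebesgue
      (\<lambda>w. complex_of_real (\<phi> w * gauss_dens \<alpha> w) * f w * cnj (fock_kernel \<alpha> z w))"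

definition compact_on_fock_inf :: "real \<Rightarrow> ((complex \<Rightarrow> complex) \<Rightarrow> (complex \<Rightarrow> complex)) \<Rightarrow> bool" where
  "compact_on_fock_inf \<alpha> T \<longleftrightarrow>
     (\<forall>f \<in> fock_inf \<alpha>. T f \<in> fock_inf \<alpha>) \<and>
     (\<forall>fs :: nat \<Rightarrow> complex \<Rightarrow> complex. (\<forall>n. fs n \<in> fock_inf \<alpha>) \<longrightarrow>
        bdd_above (range (\<lambda>n. fock_inf_norm \<alpha> (fs n))) \<longrightarrow>
        (\<exists>r g. strict_mono r \<and> g \<in> fock_inf \<alpha> \<and>
           (\<lambda>n. fock_inf_norm \<alpha> (\<lambda>z. T (fs (r n)) z - g z)) \<longlonglongrightarrow> 0))"

(* heat transform, as an extended nonnegative value (phi >= 0; it may a priori be infinite) *)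
definition heat_transform :: "real \<Rightarrow> (complex \<Rightarrow> real) \<Rightarrow> real \<Rightarrow> complex \<Rightarrow> ennreal" where
  "heat_transform \<alpha> \<phi> t z = (\<integral>\<^sup>+ w. ennreal ((\<alpha> / pi) * \<phi> w * exp (- \<alpha> * t * (cmod (z - w))\<^sup>2 / 2)) \<partial>lebesgue)"

definition in_C0 :: "(complex \<Rightarrow> ennreal) \<Rightarrow> bool" where
  "in_C0 F \<longleftrightarrow> (\<forall>z. F z < \<infinity>) \<and> continuous_on UNIV (\<lambda>z. enn2real (F z)) \<and>
      ((\<lambda>z. enn2real (F z)) \<longlongrightarrow> 0) at_infinity"

end

theory Submission
  imports Defs "HOL-Complex_Analysis.Complex_Analysis" "HOL-Probability.Distributions"
begin

text \<open>
  Write \<open>\<phi>~\<^sub>t\<close> for the heat transform and \<open>k\<^sub>a = K\<^sub>a e\<^bsup>-\<alpha>|a|\<^sup>2/2\<^esup>\<close> for the normalised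
  kernels, which have norm at most \<open>1\<close>. Then \<open>|T k\<^sub>a(a)| e\<^bsup>-\<alpha>|a|\<^sup>2/2\<^esup>\<close> is the Berezin
  transform \<open>\<phi>~\<^sub>2(a)\<close>, and \<open>|T k\<^sub>a(z)| \<le> e\<^bsup>-\<alpha>|a|\<^sup>2/8 + 3\<alpha>|z|\<^sup>2/4\<^esup> sup \<phi>~\<^sub>2\<close>. If \<open>T\<close> is
  compact, \<open>\<phi>~\<^sub>2\<close> is therefore bounded, and it vanishes at infinity because a norm limit of
  \<open>T k\<^bsub>a(n)\<^esub>\<close> with \<open>a(n) \<rightarrow> \<infinity>\<close> is \<open>0\<close>. A bounded \<open>\<phi>~\<^sub>2\<close> vanishing at infinity puts every
  \<open>\<phi>~\<^sub>t\<close> into \<open>C\<^sub>0\<close>: for \<open>t \<ge> 2\<close> we have \<open>\<phi>~\<^sub>t \<le> \<phi>~\<^sub>2\<close>, and for \<open>t < 2\<close> a Gaussian of width \<open>t\<close>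
  is dominated by a Gaussian average of Gaussians of width \<open>2\<close>, so \<open>\<phi>~\<^sub>t\<close> is dominated by a
  Gaussian average of \<open>\<phi>~\<^sub>2\<close>; continuity and decay follow by dominated convergence.

  Conversely, \<open>|T f(z)| e\<^bsup>-\<alpha>|z|\<^sup>2/2\<^esup>\<close> is at most the integral of \<open>|f(w)| e\<^bsup>-\<alpha>|w|\<^sup>2/2\<^esup>\<close>
  against a measure of total mass \<open>\<phi>~\<^sub>1(z)\<close>. By Montel's theorem a bounded sequence in
  \<open>F\<^sup>\<infinity>\<^sub>\<alpha>\<close> has a locally uniformly convergent subsequence; the images of the differences are
  small on a large disc by local uniform convergence, and the contribution from outside the disc
  is small uniformly in \<open>z\<close> because \<open>\<phi>~\<^sub>1\<close> vanishes at infinity and \<open>\<phi>~\<^bsub>1/4\<^esub>(0) < \<infinity>\<close>.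
\<close>

lemma gauss_exponent_complete_square:
  fixes c w :: complex
  shows "- \<alpha> * (cmod w)\<^sup>2 + 2 * \<alpha> * Re (cnj c * w) = - \<alpha> * (cmod (w - c))\<^sup>2 + \<alpha> * (cmod c)\<^sup>2"
  unfolding cmod_power2 by (simp add: power2_eq_square algebra_simps)

lemma gauss_exponent_complete_square_half:
  fixes c w :: complex
  shows "- \<alpha> * (cmod w)\<^sup>2 / 2 + \<alpha> * Re (cnj c * w) = - \<alpha> * (cmod (w - c))\<^sup>2 / 2 + \<alpha> * (cmod c)\<^sup>2 / 2"
  using gauss_exponent_complete_square[of \<alpha> w c] by (simp add: field_simps)

lemma norm_fock_kernel: "cmod (fock_kernel \<alpha> z w) = exp (\<alpha> * Re (cnj z * w))"
  by (simp add: fock_kernel_def norm_exp_eq_Re algebra_simps)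

lemma cnj_fock_kernel: "cnj (fock_kernel \<alpha> z w) = exp (complex_of_real \<alpha> * z * cnj w)"
  by (simp add: fock_kernel_def exp_cnj)

lemma continuous_on_imp_lebesgue_measurable:
  fixes f :: "complex \<Rightarrow> 'b::{banach,second_countable_topology}"
  shows "continuous_on UNIV f \<Longrightarrow> f \<in> borel_measurable lebesgue"
  by (intro measurable_completion) (simp add: borel_measurable_continuous_onI)

lemma fock_inf_norm_upper:
  assumes "f \<in> fock_inf \<alpha>"
  shows "cmod (f z) * exp (- \<alpha> * (cmod z)\<^sup>2 / 2) \<le> fock_inf_norm \<alpha> f"
  using assms unfolding fock_inf_def fock_inf_norm_def by (auto intro: cSUP_upper)

lemma fock_inf_growth:
  assumes "f \<in> fock_inf \<alpha>"
  shows "cmod (f z) \<le> fock_inf_norm \<alpha> f * exp (\<alpha> * (cmod z)\<^sup>2 / 2)"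
proof -
  have "cmod (f z) = cmod (f z) * exp (- \<alpha> * (cmod z)\<^sup>2 / 2) * exp (\<alpha> * (cmod z)\<^sup>2 / 2)"
    by (simp add: mult.assoc exp_add[symmetric])
  also have "\<dots> \<le> fock_inf_norm \<alpha> f * exp (\<alpha> * (cmod z)\<^sup>2 / 2)"
    by (rule mult_right_mono[OF fock_inf_norm_upper[OF assms]]) simp
  finally show ?thesis .
qed

lemma weighted_le_of_growth:
  assumes "cmod (h w) \<le> K * exp (\<alpha> * (cmod w)\<^sup>2 / 2)"
  shows "cmod (h w) * exp (- \<alpha> * (cmod w)\<^sup>2 / 2) \<le> K"
proof -
  have "cmod (h w) * exp (- \<alpha> * (cmod w)\<^sup>2 / 2) \<le> K * exp (\<alpha> * (cmod w)\<^sup>2 / 2) * exp (- \<alpha> * (cmod w)\<^sup>2 / 2)"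
    by (rule mult_right_mono[OF assms]) simp
  also have "\<dots> = K" by (simp add: mult.assoc mult_exp_exp)
  finally show ?thesis .
qed

lemma fock_inf_norm_le:
  assumes "\<And>z. cmod (f z) * exp (- \<alpha> * (cmod z)\<^sup>2 / 2) \<le> B"
  shows "fock_inf_norm \<alpha> f \<le> B"
  unfolding fock_inf_norm_def by (rule cSUP_least) (use assms in auto)

lemma fock_inf_norm_nonneg:
  assumes "f \<in> fock_inf \<alpha>"
  shows "0 \<le> fock_inf_norm \<alpha> f"
  by (rule order_trans[OF _ fock_inf_norm_upper[OF assms, of 0]]) simp

lemma fock_infI:
  assumes "f holomorphic_on UNIV" "\<And>z. cmod (f z) * exp (- \<alpha> * (cmod z)\<^sup>2 / 2) \<le> B"
  shows "f \<in> fock_inf \<alpha>"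
  using assms unfolding fock_inf_def by (auto intro!: bdd_aboveI2)

lemma fock_inf_holomorphic: "f \<in> fock_inf \<alpha> \<Longrightarrow> f holomorphic_on UNIV"
  by (simp add: fock_inf_def)

lemma fock_inf_continuous: "f \<in> fock_inf \<alpha> \<Longrightarrow> continuous_on UNIV f"
  by (simp add: fock_inf_holomorphic holomorphic_on_imp_continuous_on)

lemma fock_inf_diff:
  assumes "f \<in> fock_inf \<alpha>" "g \<in> fock_inf \<alpha>"
  shows "(\<lambda>z. f z - g z) \<in> fock_inf \<alpha>"
proof (rule fock_infI)
  show "(\<lambda>z. f z - g z) holomorphic_on UNIV"
    using assms[THEN fock_inf_holomorphic] by (auto intro!: holomorphic_intros)
  fix z
  have "cmod (f z - g z) * exp (- \<alpha> * (cmod z)\<^sup>2 / 2) \<le>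
        (cmod (f z) + cmod (g z)) * exp (- \<alpha> * (cmod z)\<^sup>2 / 2)"
    by (rule mult_right_mono) (auto simp: norm_triangle_ineq4)
  also have "\<dots> \<le> fock_inf_norm \<alpha> f + fock_inf_norm \<alpha> g"
    using fock_inf_norm_upper[OF assms(1), of z] fock_inf_norm_upper[OF assms(2), of z]
    by (simp add: algebra_simps)
  finally show "cmod (f z - g z) * exp (- \<alpha> * (cmod z)\<^sup>2 / 2) \<le> fock_inf_norm \<alpha> f + fock_inf_norm \<alpha> g" .
qed

lemma fock_inf_norm_triangle:
  assumes "f \<in> fock_inf \<alpha>" "g \<in> fock_inf \<alpha>"
  shows "fock_inf_norm \<alpha> f \<le> fock_inf_norm \<alpha> (\<lambda>z. f z - g z) + fock_inf_norm \<alpha> g"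
proof (rule fock_inf_norm_le)
  fix z
  have "cmod (f z) * exp (- \<alpha> * (cmod z)\<^sup>2 / 2) \<le>
        (cmod (f z - g z) + cmod (g z)) * exp (- \<alpha> * (cmod z)\<^sup>2 / 2)"
    by (rule mult_right_mono) (use norm_triangle_ineq[of "f z - g z" "g z"] in auto)
  also have "\<dots> \<le> fock_inf_norm \<alpha> (\<lambda>z. f z - g z) + fock_inf_norm \<alpha> g"
    using fock_inf_norm_upper[OF fock_inf_diff[OF assms], of z] fock_inf_norm_upper[OF assms(2), of z]
    by (simp add: algebra_simps)
  finally show "cmod (f z) * exp (- \<alpha> * (cmod z)\<^sup>2 / 2) \<le> fock_inf_norm \<alpha> (\<lambda>z. f z - g z) + fock_inf_norm \<alpha> g" .
qed

lemma compact_on_fock_inf_maps: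
  "compact_on_fock_inf \<alpha> S \<Longrightarrow> f \<in> fock_inf \<alpha> \<Longrightarrow> S f \<in> fock_inf \<alpha>"
  unfolding compact_on_fock_inf_def by blast

lemma compact_on_fock_infE:
  fixes fs :: "nat \<Rightarrow> complex \<Rightarrow> complex"
  assumes "compact_on_fock_inf \<alpha> S" "\<And>n. fs n \<in> fock_inf \<alpha>" "\<And>n. fock_inf_norm \<alpha> (fs n) \<le> C"
  obtains r :: "nat \<Rightarrow> nat" and g where "strict_mono r" "g \<in> fock_inf \<alpha>"
    "(\<lambda>n. fock_inf_norm \<alpha> (\<lambda>z. S (fs (r n)) z - g z)) \<longlonglongrightarrow> 0"
proof -
  have "bdd_above (range (\<lambda>n. fock_inf_norm \<alpha> (fs n)))"
    by (rule bdd_aboveI2[where M=C]) (rule assms(3))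
  then show thesis
    using assms(1,2) that unfolding compact_on_fock_inf_def by blast
qed

lemma fock_inf_norm_tendsto_imp_pointwise:
  assumes "\<And>n. f n \<in> fock_inf \<alpha>" "g \<in> fock_inf \<alpha>"
    and "(\<lambda>n. fock_inf_norm \<alpha> (\<lambda>z. f n z - g z)) \<longlonglongrightarrow> 0"
  shows "(\<lambda>n. f n z) \<longlonglongrightarrow> g z"
proof -
  have "(\<lambda>n. f n z - g z) \<longlonglongrightarrow> 0"
  proof (rule Lim_null_comparison)
    show "\<forall>\<^sub>F n in sequentially. cmod (f n z - g z) \<le> fock_inf_norm \<alpha> (\<lambda>z. f n z - g z) * exp (\<alpha> * (cmod z)\<^sup>2 / 2)"
      using fock_inf_growth[OF fock_inf_diff[OF assms(1,2)]] by simp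
    show "(\<lambda>n. fock_inf_norm \<alpha> (\<lambda>z. f n z - g z) * exp (\<alpha> * (cmod z)\<^sup>2 / 2)) \<longlonglongrightarrow> 0"
      using assms(3) by (rule tendsto_mult_left_zero)
  qed
  then show ?thesis by (rule LIM_zero_cancel)
qed

lemma fock_inf_bounded_seq_subseq:
  fixes fs :: "nat \<Rightarrow> complex \<Rightarrow> complex"
  assumes fs: "\<And>n. fs n \<in> fock_inf \<alpha>" and bound: "\<And>n. fock_inf_norm \<alpha> (fs n) \<le> C"
  obtains r g where "strict_mono r" "g \<in> fock_inf \<alpha>"
    "\<And>w. cmod (g w) * exp (- \<alpha> * (cmod w)\<^sup>2 / 2) \<le> C"
    "\<And>K. compact K \<Longrightarrow> uniform_limit K (fs \<circ> r) g sequentially"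
proof -
  have C: "C \<ge> 0" using fock_inf_norm_nonneg[OF fs] bound order_trans by blast
  have growth: "cmod (fs n w) \<le> C * exp (\<alpha> * (cmod w)\<^sup>2 / 2)" for n w
    using fock_inf_growth[OF fs, of n w] bound[of n] by (meson exp_ge_zero mult_right_mono order_trans)
  define \<H> where "\<H> = {h. h holomorphic_on UNIV \<and> (\<forall>w. cmod (h w) \<le> C * exp (\<alpha> * (cmod w)\<^sup>2 / 2))}"
  obtain g r where g: "g holomorphic_on UNIV" and r: "strict_mono (r :: nat \<Rightarrow> nat)"
    and pointwise: "\<And>w. (\<lambda>n. fs (r n) w) \<longlonglongrightarrow> g w"
    and uniform: "\<And>K. compact K \<Longrightarrow> uniform_limit K (fs \<circ> r) g sequentially"
  proof (rule Montel[of UNIV \<H> fs])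
    show "range fs \<subseteq> \<H>" unfolding \<H>_def using fs growth by (auto intro: fock_inf_holomorphic)
    fix K :: "complex set" assume "compact K"
    then obtain R where R: "\<And>z. z \<in> K \<Longrightarrow> norm z \<le> R" using compact_imp_bounded bounded_iff by metis
    have "norm (h z) \<le> C * exp (\<bar>\<alpha>\<bar> * R\<^sup>2 / 2)" if "h \<in> \<H>" "z \<in> K" for h z
    proof -
      have "\<alpha> * (cmod z)\<^sup>2 \<le> \<bar>\<alpha>\<bar> * R\<^sup>2"
        using R[OF \<open>z \<in> K\<close>] by (intro order_trans[OF abs_ge_self[of "\<alpha> * (cmod z)\<^sup>2"]])
           (auto simp: abs_mult intro!: mult_left_mono power_mono)
      then have "C * exp (\<alpha> * (cmod z)\<^sup>2 / 2) \<le> C * exp (\<bar>\<alpha>\<bar> * R\<^sup>2 / 2)"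
        using C by (intro mult_left_mono) auto
      with that show ?thesis unfolding \<H>_def by (auto intro: order_trans)
    qed
    then show "\<exists>B. \<forall>h\<in>\<H>. \<forall>z\<in>K. norm (h z) \<le> B" by blast
  qed (auto simp: \<H>_def)
  have weighted: "cmod (g w) * exp (- \<alpha> * (cmod w)\<^sup>2 / 2) \<le> C" for w
    by (rule weighted_le_of_growth, rule LIMSEQ_le_const2[OF tendsto_norm[OF pointwise]])
       (use growth in auto)
  show thesis
    by (rule that[OF r fock_infI[OF g weighted] weighted uniform])
qed

lemma weighted_diff_le_split:
  assumes "\<alpha> \<ge> 0" "C \<ge> 0" "\<eta> \<ge> 0"
    and "\<And>w. cmod (f w) * exp (- \<alpha> * (cmod w)\<^sup>2 / 2) \<le> C"
    and "\<And>w. cmod (g w) * exp (- \<alpha> * (cmod w)\<^sup>2 / 2) \<le> C"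
    and close: "\<And>w. w \<in> cball 0 R \<Longrightarrow> cmod (f w - g w) < \<eta>"
  shows "cmod (f w - g w) * exp (- \<alpha> * (cmod w)\<^sup>2 / 2) \<le> \<eta> + 2 * C * (if R < cmod w then 1 else 0)"
proof (cases "R < cmod w")
  case True
  have "cmod (f w - g w) * exp (- \<alpha> * (cmod w)\<^sup>2 / 2)
      \<le> cmod (f w) * exp (- \<alpha> * (cmod w)\<^sup>2 / 2) + cmod (g w) * exp (- \<alpha> * (cmod w)\<^sup>2 / 2)"
    unfolding distrib_right[symmetric] by (rule mult_right_mono[OF norm_triangle_ineq4]) simp
  also have "\<dots> \<le> C + C" using assms(4,5) by (rule add_mono)
  finally show ?thesis using True assms(3) by simp
next
  case False
  then have "cmod (f w - g w) \<le> \<eta>" using close[of w] by simp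
  moreover have "exp (- \<alpha> * (cmod w)\<^sup>2 / 2) \<le> 1" using assms(1) by simp
  ultimately have "cmod (f w - g w) * exp (- \<alpha> * (cmod w)\<^sup>2 / 2) \<le> \<eta> * 1"
    using assms(3) by (intro mult_mono) auto
  then show ?thesis using False by simp
qed

lemma exp_midpoint_decay:
  fixes a z :: complex
  assumes "\<alpha> \<ge> 0"
  shows "exp (- \<alpha> * (cmod a)\<^sup>2 / 2 + \<alpha> * (cmod ((a + z) / 2))\<^sup>2) \<le> exp (- \<alpha> * (cmod a)\<^sup>2 / 8 + 3 * \<alpha> * (cmod z)\<^sup>2 / 4)"
proof -
  have "cmod ((a + z) / 2) \<le> (cmod a + cmod z) / 2"
    using norm_triangle_ineq[of a z] by (simp add: norm_divide)
  then have "(cmod ((a + z) / 2))\<^sup>2 \<le> ((cmod a + cmod z) / 2)\<^sup>2"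
    by (rule power_mono) simp
  moreover have "0 \<le> (cmod a - 2 * cmod z)\<^sup>2" by simp
  ultimately have "(cmod ((a + z) / 2))\<^sup>2 - (cmod a)\<^sup>2 / 2 \<le> 3 * (cmod z)\<^sup>2 / 4 - (cmod a)\<^sup>2 / 8"
    by (simp add: power2_eq_square algebra_simps)
  then have "\<alpha> * ((cmod ((a + z) / 2))\<^sup>2 - (cmod a)\<^sup>2 / 2) \<le> \<alpha> * (3 * (cmod z)\<^sup>2 / 4 - (cmod a)\<^sup>2 / 8)"
    using assms by (rule mult_left_mono)
  then show ?thesis by (simp add: algebra_simps)
qed

lemma norm_diff_square_le:
  fixes a w x :: complex
  shows "(cmod (a - w))\<^sup>2 \<le> 2 * (cmod (x - w))\<^sup>2 + 2 * (cmod (x - a))\<^sup>2"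
proof -
  have "cmod (a - w) \<le> cmod (x - w) + cmod (x - a)"
    using norm_triangle_ineq4[of "x - w" "x - a"] by simp
  then have "(cmod (a - w))\<^sup>2 \<le> (cmod (x - w) + cmod (x - a))\<^sup>2"
    by (rule power_mono) simp
  also have "\<dots> \<le> 2 * (cmod (x - w))\<^sup>2 + 2 * (cmod (x - a))\<^sup>2"
    using sum_squares_bound[of "cmod (x - w)" "cmod (x - a)"]
    by (simp add: power2_eq_square algebra_simps)
  finally show ?thesis .
qed

lemma gauss_shift_le:
  fixes a x w :: complex
  assumes "c \<ge> 0" "cmod (x - a) \<le> D"
  shows "exp (- c * (cmod (x - w))\<^sup>2 / 2) \<le> exp (c * D\<^sup>2 / 2) * exp (- (c / 2) * (cmod (a - w))\<^sup>2 / 2)"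
proof -
  have "(cmod (x - a))\<^sup>2 \<le> D\<^sup>2" by (rule power_mono[OF assms(2)]) simp
  then have "(cmod (a - w))\<^sup>2 / 4 - (cmod (x - w))\<^sup>2 / 2 - D\<^sup>2 / 2 \<le> 0"
    using norm_diff_square_le[of a w x] by linarith
  then have "c * ((cmod (a - w))\<^sup>2 / 4 - (cmod (x - w))\<^sup>2 / 2 - D\<^sup>2 / 2) \<le> 0"
    using assms(1) by (rule mult_nonneg_nonpos[rotated])
  then have "- c * (cmod (x - w))\<^sup>2 / 2 \<le> c * D\<^sup>2 / 2 + (- (c / 2) * (cmod (a - w))\<^sup>2 / 2)"
    by (simp add: algebra_simps)
  then show ?thesis by (simp add: mult_exp_exp)
qed

lemma norm_exp_minus_one_le:
  fixes v :: complex
  shows "cmod (exp v - 1) \<le> cmod v * exp (cmod v)"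
proof -
  have "norm (exp v - exp 0) \<le> exp (cmod v) * norm (v - 0)"
  proof (rule field_differentiable_bound[where S="cball 0 (cmod v)" and f'=exp])
    fix z :: complex assume z: "z \<in> cball 0 (cmod v)"
    show "(exp has_field_derivative exp z) (at z within cball 0 (cmod v))"
      by (rule DERIV_subset[OF DERIV_exp]) simp
    have "norm (exp z) \<le> exp (norm z)" by (rule norm_exp)
    also have "\<dots> \<le> exp (cmod v)" using z by simp
    finally show "norm (exp z) \<le> exp (cmod v)" .
  qed auto
  then show ?thesis by (simp add: mult.commute)
qed

lemma norm_exp_difference_quotient_le:
  fixes u w z :: complex
  assumes "\<alpha> \<ge> 0" "u \<noteq> 0" "cmod u \<le> D"
  shows "norm ((exp (complex_of_real \<alpha> * u * cnj w) - 1) / u)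
    \<le> \<alpha> * exp ((1 + \<alpha> * D) * cmod (z - w)) * exp ((1 + \<alpha> * D) * cmod z)"
proof -
  define \<beta> where "\<beta> = 1 + \<alpha> * D"
  define R where "R = cmod w"
  have \<beta>: "\<beta> \<ge> 0" unfolding \<beta>_def using assms norm_ge_zero[of u] by (smt (verit) mult_nonneg_nonneg)
  have "norm (exp (complex_of_real \<alpha> * u * cnj w) - 1) \<le> \<alpha> * cmod u * R * exp (\<alpha> * cmod u * R)"
    using norm_exp_minus_one_le[of "complex_of_real \<alpha> * u * cnj w"] assms(1)
    by (simp add: R_def norm_mult)
  then have "norm ((exp (complex_of_real \<alpha> * u * cnj w) - 1) / u) \<le> \<alpha> * R * exp (\<alpha> * cmod u * R)"
    using assms(2) by (simp add: norm_divide field_simps)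
  also have "\<dots> \<le> \<alpha> * (exp R * exp (\<alpha> * D * R))"
  proof -
    have "R \<le> exp R" using exp_ge_add_one_self[of R] by linarith
    moreover have "\<alpha> * cmod u * R \<le> \<alpha> * D * R"
      using assms unfolding R_def by (intro mult_right_mono mult_left_mono) auto
    ultimately have "R * exp (\<alpha> * cmod u * R) \<le> exp R * exp (\<alpha> * D * R)"
      unfolding R_def by (intro mult_mono) auto
    then show ?thesis using assms(1) by (simp add: mult.assoc mult_left_mono)
  qed
  also have "exp R * exp (\<alpha> * D * R) = exp (\<beta> * R)"
    unfolding \<beta>_def by (simp add: mult_exp_exp algebra_simps)
  also have "exp (\<beta> * R) \<le> exp (\<beta> * cmod (z - w)) * exp (\<beta> * cmod z)"
    using norm_triangle_ineq4[of z "z - w"] \<beta> unfolding R_def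
    by (simp add: mult_exp_exp distrib_left[symmetric] mult_left_mono)
  finally show ?thesis using assms(1) unfolding \<beta>_def by (simp add: mult_left_mono mult.assoc)
qed

lemma linear_minus_quadratic_le:
  fixes a x \<beta> :: real
  assumes "a > 0"
  shows "\<beta> * x - a * x\<^sup>2 / 4 \<le> \<beta>\<^sup>2 / a"
proof -
  have "0 \<le> (a * x - 2 * \<beta>)\<^sup>2 / (4 * a)" using assms by simp
  also have "(a * x - 2 * \<beta>)\<^sup>2 / (4 * a) = \<beta>\<^sup>2 / a - (\<beta> * x - a * x\<^sup>2 / 4)"
    using assms by (simp add: power2_eq_square field_simps)
  finally show ?thesis by simp
qed

lemma exp_difference_quotient_tendsto:
  fixes c :: complex
  shows "((\<lambda>u. (exp (c * u) - 1) / u) \<longlongrightarrow> c) (at 0)"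
proof -
  have "((\<lambda>u. exp (c * u)) has_field_derivative c * exp (c * 0)) (at 0)"
    by (auto intro!: derivative_eq_intros)
  then show ?thesis by (simp add: has_field_derivative_iff)
qed

lemma not_tendsto_at_infinityE:
  fixes f :: "'a::real_normed_vector \<Rightarrow> 'b::metric_space"
  assumes "\<not> (f \<longlongrightarrow> l) at_infinity"
  obtains e X where "e > 0" "filterlim X at_infinity sequentially" "\<And>n. e \<le> dist (f (X n)) l"
proof -
  obtain e where e: "e > 0" and "\<forall>b. \<exists>x. b \<le> norm x \<and> \<not> dist (f x) l < e"
    using assms unfolding tendsto_iff eventually_at_infinity by blast
  then have "\<forall>n::nat. \<exists>x. real n \<le> norm x \<and> e \<le> dist (f x) l"
    by (auto simp: not_less)
  then obtain X where X: "\<And>n. real n \<le> norm (X n)" "\<And>n. e \<le> dist (f (X n)) l"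
    by (metis choice)
  have "filterlim (\<lambda>n. norm (X n)) at_top sequentially"
    by (rule filterlim_at_top_mono[OF filterlim_real_sequentially]) (use X(1) in auto)
  then have "filterlim X at_infinity sequentially"
    by (rule filterlim_norm_at_top_imp_at_infinity)
  then show thesis using e X(2) that by blast
qed

lemma tendsto_at_infinity_sequentially:
  fixes f :: "'a::real_normed_vector \<Rightarrow> 'b::metric_space"
  assumes "\<And>X. filterlim X at_infinity sequentially \<Longrightarrow> (\<lambda>n. f (X n)) \<longlonglongrightarrow> l"
  shows "(f \<longlongrightarrow> l) at_infinity"
proof (rule ccontr)
  assume not_lim: "\<not> ?thesis"
  from not_lim obtain e X where e: "e > 0" and X: "filterlim X at_infinity sequentially"
    and far: "\<And>n. e \<le> dist (f (X n)) l"
    by (rule not_tendsto_at_infinityE) fast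
  obtain n where "dist (f (X n)) l < e"
    using tendstoD[OF assms[OF X] e] by (auto simp: eventually_sequentially)
  with far[of n] show False by simp
qed

lemma tendsto_exp_neg_norm_square_at_infinity:
  assumes "c > 0"
  shows "((\<lambda>x::'a::real_normed_vector. exp (- c * (norm x)\<^sup>2)) \<longlongrightarrow> 0) at_infinity"
proof -
  have "filterlim (\<lambda>x::'a. c * (norm x)\<^sup>2) at_top at_infinity"
    by (intro filterlim_tendsto_pos_mult_at_top[OF tendsto_const assms]
        filterlim_pow_at_top filterlim_norm_at_top) simp
  then have "filterlim (\<lambda>x::'a. - c * (norm x)\<^sup>2) at_bot at_infinity"
    by (simp add: filterlim_uminus_at_top)
  then show ?thesis by (rule filterlim_compose[OF exp_at_bot])
qed

lemma bounded_of_continuous_vanishing: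
  fixes g :: "complex \<Rightarrow> real"
  assumes "continuous_on UNIV g" "(g \<longlongrightarrow> 0) at_infinity"
  obtains M where "M \<ge> 0" "\<And>z. g z \<le> M"
proof -
  have "eventually (\<lambda>z. dist (g z) 0 < 1) at_infinity" using assms(2) by (rule tendstoD) simp
  then obtain R where R: "\<And>z. R \<le> norm z \<Longrightarrow> \<bar>g z\<bar> < 1"
    unfolding eventually_at_infinity by auto
  have "compact (g ` cball 0 \<bar>R\<bar>)"
    by (rule compact_continuous_image[OF continuous_on_subset[OF assms(1)]]) auto
  then obtain M' where M': "\<And>x. x \<in> g ` cball 0 \<bar>R\<bar> \<Longrightarrow> norm x \<le> M'"
    using compact_imp_bounded bounded_iff by metis
  have "g z \<le> max 1 M'" for z
  proof (cases "R \<le> norm z")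
    case True then show ?thesis using R[of z] by simp
  next
    case False then have "z \<in> cball 0 \<bar>R\<bar>" by auto
    then show ?thesis using M'[of "g z"] by (auto simp: abs_le_iff le_max_iff_disj)
  qed
  then show thesis by (intro that[of "max 1 M'"]) auto
qed

lemma integral_outside_ball_tendsto_zero:
  fixes f :: "complex \<Rightarrow> real"
  assumes "integrable lebesgue f"
  shows "(\<lambda>n. \<integral>w. (if real n < cmod w then 1 else 0) * f w \<partial>lebesgue) \<longlonglongrightarrow> 0"
proof -
  have [measurable]: "f \<in> borel_measurable lebesgue" using assms by (rule borel_measurable_integrable)
  have [measurable]: "(\<lambda>x::complex. x) \<in> borel_measurable lebesgue"
    by (rule continuous_on_imp_lebesgue_measurable) (rule continuous_on_id)
  have "(\<lambda>n. \<integral>w. (if real n < cmod w then 1 else 0) * f w \<partial>lebesgue)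
      \<longlonglongrightarrow> integral\<^sup>L lebesgue (\<lambda>w::complex. 0::real)"
  proof (rule integral_dominated_convergence[where w="\<lambda>w. norm (f w)"])
    show "AE w in lebesgue. (\<lambda>n. (if real n < cmod w then 1 else 0) * f w) \<longlonglongrightarrow> 0"
    proof (intro AE_I2 tendsto_eventually)
      fix w :: complex
      show "\<forall>\<^sub>F n in sequentially. (if real n < cmod w then 1 else 0) * f w = 0"
        unfolding eventually_sequentially
        by (intro exI[of _ "nat \<lceil>cmod w\<rceil>"] allI impI) (auto dest!: real_nat_ceiling_ge[THEN order_trans] simp: not_less)
    qed
  qed (use assms in auto)
  then show ?thesis by simp
qed

lemma nn_integral_gaussian_finite:
  assumes "b > (0::real)"
  shows "(\<integral>\<^sup>+ x. ennreal (exp (- b * x\<^sup>2)) \<partial>lborel) < \<infinity>"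
proof -
  define \<sigma> where "\<sigma> = sqrt (1 / (2 * b))"
  have \<sigma>: "\<sigma> > 0" "\<sigma>\<^sup>2 = 1 / (2 * b)" unfolding \<sigma>_def using assms by auto
  have eq: "exp (- b * x\<^sup>2) = sqrt (2 * pi * \<sigma>\<^sup>2) * normal_density 0 \<sigma> x" for x
    unfolding normal_density_def using \<sigma> assms by (simp add: field_simps)
  have "(\<integral>\<^sup>+ x. ennreal (exp (- b * x\<^sup>2)) \<partial>lborel)
      = ennreal (\<integral>x. sqrt (2 * pi * \<sigma>\<^sup>2) * normal_density 0 \<sigma> x \<partial>lborel)"
    unfolding eq using \<sigma> assms
    by (intro nn_integral_eq_integral integrable_mult_right integrable_normal_density AE_I2)
       (auto intro!: mult_nonneg_nonneg)
  then show ?thesis by simp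
qed

lemma nn_integral_gaussian_complex_finite:
  assumes "b > (0::real)"
  shows "(\<integral>\<^sup>+ y. ennreal (exp (- b * (cmod y)\<^sup>2)) \<partial>(lborel :: complex measure)) < \<infinity>"
proof -
  have eq: "ennreal (exp (- b * (cmod y)\<^sup>2)) = (\<Prod>u\<in>Basis. ennreal (exp (- b * (y \<bullet> u)\<^sup>2)))" for y :: complex
  proof -
    have "(\<Prod>u\<in>Basis. ennreal (exp (- b * (y \<bullet> u)\<^sup>2)))
        = ennreal (exp (- b * (Re y)\<^sup>2) * exp (- b * (Im y)\<^sup>2))"
      by (simp add: Basis_complex_def inner_complex_def ennreal_mult'')
    also have "exp (- b * (Re y)\<^sup>2) * exp (- b * (Im y)\<^sup>2) = exp (- b * (cmod y)\<^sup>2)"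
      by (simp add: cmod_power2 mult_exp_exp algebra_simps)
    finally show ?thesis by simp
  qed
  have "(\<integral>\<^sup>+ y. ennreal (exp (- b * (cmod y)\<^sup>2)) \<partial>(lborel :: complex measure))
      = (\<Prod>u\<in>(Basis::complex set). (\<integral>\<^sup>+ x. ennreal (exp (- b * x\<^sup>2)) \<partial>lborel))"
    unfolding eq by (rule nn_integral_lborel_prod) auto
  also have "\<dots> < \<infinity>"
    using nn_integral_gaussian_finite[OF assms] by (simp add: Basis_complex_def ennreal_mult_less_top)
  finally show ?thesis .
qed

lemma integrable_gaussian_complex:
  assumes "b > (0::real)"
  shows "integrable lborel (\<lambda>y::complex. exp (- b * (cmod y)\<^sup>2))"
  by (rule integrableI_bounded) (use nn_integral_gaussian_complex_finite[OF assms] in auto)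

lemma complete_square_real:
  fixes a b x y :: real
  assumes "a > 0" "b > 0"
  shows "a * (x - y)\<^sup>2 + b * y\<^sup>2 = (a + b) * (y - (a / (a + b)) * x)\<^sup>2 + (a * b / (a + b)) * x\<^sup>2"
proof -
  have ab: "a + b > 0" using assms by simp
  have e1: "y - (a / (a + b)) * x = ((a + b) * y - a * x) / (a + b)"
    using ab by (simp add: field_simps)
  have e2: "((a + b) * y - a * x)\<^sup>2 + a * b * x\<^sup>2 = (a + b) * (a * (x - y)\<^sup>2 + b * y\<^sup>2)"
    by (simp add: power2_eq_square algebra_simps)
  have "(a + b) * (y - (a / (a + b)) * x)\<^sup>2 + (a * b / (a + b)) * x\<^sup>2
      = (((a + b) * y - a * x)\<^sup>2 + a * b * x\<^sup>2) / (a + b)"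
    unfolding e1 using ab by (simp add: power_divide power2_eq_square add_divide_distrib)
  also have "\<dots> = a * (x - y)\<^sup>2 + b * y\<^sup>2"
    unfolding e2 using ab by simp
  finally show ?thesis by simp
qed

lemma complete_square_complex:
  fixes x y :: complex and a b :: real
  assumes "a > 0" "b > 0"
  shows "a * (cmod (x - y))\<^sup>2 + b * (cmod y)\<^sup>2
       = (a + b) * (cmod (y - of_real (a / (a + b)) * x))\<^sup>2 + (a * b / (a + b)) * (cmod x)\<^sup>2"
proof -
  have "a * (cmod (x - y))\<^sup>2 + b * (cmod y)\<^sup>2
      = (a * (Re x - Re y)\<^sup>2 + b * (Re y)\<^sup>2) + (a * (Im x - Im y)\<^sup>2 + b * (Im y)\<^sup>2)"
    unfolding cmod_power2 by (simp add: algebra_simps)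
  also have "\<dots> = ((a + b) * (Re y - (a / (a + b)) * Re x)\<^sup>2 + (a * b / (a + b)) * (Re x)\<^sup>2)
                + ((a + b) * (Im y - (a / (a + b)) * Im x)\<^sup>2 + (a * b / (a + b)) * (Im x)\<^sup>2)"
    using complete_square_real[OF assms, of "Re x" "Re y"] complete_square_real[OF assms, of "Im x" "Im y"]
    by simp
  also have "\<dots> = (a + b) * (cmod (y - of_real (a / (a + b)) * x))\<^sup>2 + (a * b / (a + b)) * (cmod x)\<^sup>2"
    unfolding cmod_power2 by (simp add: algebra_simps)
  finally show ?thesis .
qed

text \<open>Restricting the integral to the unit ball around the minimiser \<open>a x / (a + b)\<close> of the exponent.\<close>

lemma gaussian_product_integral_lower:
  fixes x :: complex and a b :: real
  assumes "a > 0" "b > 0"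
  shows "ennreal (exp (- (a + b)) * exp (- (a * b / (a + b)) * (cmod x)\<^sup>2) * measure lborel (ball (0::complex) 1))
     \<le> (\<integral>\<^sup>+ y. ennreal (exp (- a * (cmod (x - y))\<^sup>2) * exp (- b * (cmod y)\<^sup>2)) \<partial>lborel)"
proof -
  define c where "c = of_real (a / (a + b)) * x"
  define K where "K = exp (- (a + b)) * exp (- (a * b / (a + b)) * (cmod x)\<^sup>2)"
  have "ennreal (K * measure lborel (ball (0::complex) 1)) = ennreal K * emeasure lborel (ball c 1)"
    using emeasure_lebesgue_ball_conv_unit_ball[of 1 c] emeasure_lborel_ball_finite[of "0::complex" 1]
    by (simp add: K_def ennreal_mult' emeasure_eq_ennreal_measure)
  also have "\<dots> = (\<integral>\<^sup>+ y. ennreal K * indicator (ball c 1) y \<partial>lborel)"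
    by (rule nn_integral_cmult_indicator[symmetric]) simp
  also have "\<dots> \<le> (\<integral>\<^sup>+ y. ennreal (exp (- a * (cmod (x - y))\<^sup>2) * exp (- b * (cmod y)\<^sup>2)) \<partial>lborel)"
  proof (rule nn_integral_mono)
    fix y :: complex
    show "ennreal K * indicator (ball c 1) y \<le> ennreal (exp (- a * (cmod (x - y))\<^sup>2) * exp (- b * (cmod y)\<^sup>2))"
    proof (cases "y \<in> ball c 1")
      case True
      then have "(cmod (y - c))\<^sup>2 \<le> 1"
        by (simp add: dist_norm norm_minus_commute power_le_one)
      then have "(a + b) * (cmod (y - c))\<^sup>2 \<le> a + b" using assms by (simp add: mult_left_le)
      then have "a * (cmod (x - y))\<^sup>2 + b * (cmod y)\<^sup>2 \<le> (a + b) + (a * b / (a + b)) * (cmod x)\<^sup>2"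
        using complete_square_complex[OF assms, of x y] unfolding c_def by simp
      then have "K \<le> exp (- a * (cmod (x - y))\<^sup>2) * exp (- b * (cmod y)\<^sup>2)"
        unfolding K_def by (simp add: mult_exp_exp)
      then show ?thesis using True by simp
    qed simp
  qed
  finally show ?thesis unfolding K_def .
qed

lemma gaussian_le_convolution:
  assumes "0 < c" "c < a"
  obtains b K where "b > 0" "K \<ge> 0"
    "\<And>x::complex. ennreal (exp (- c * (cmod x)\<^sup>2))
       \<le> ennreal K * (\<integral>\<^sup>+ y. ennreal (exp (- a * (cmod (x - y))\<^sup>2) * exp (- b * (cmod y)\<^sup>2)) \<partial>lborel)"
proof -
  define b where "b = c * a / (a - c)"
  have b: "b > 0" unfolding b_def using assms by simp
  have "a + b = a * a / (a - c)" unfolding b_def using assms by (simp add: field_simps)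
  then have ab: "a * b / (a + b) = c" unfolding b_def using assms by (simp add: field_simps)
  define v where "v = measure lborel (ball (0::complex) 1)"
  have v: "v > 0" unfolding v_def using content_ball_pos[of 1 "0::complex"] by simp
  define K where "K = exp (a + b) / v"
  have "ennreal (exp (- c * (cmod x)\<^sup>2))
       \<le> ennreal K * (\<integral>\<^sup>+ y. ennreal (exp (- a * (cmod (x - y))\<^sup>2) * exp (- b * (cmod y)\<^sup>2)) \<partial>lborel)"
    for x :: complex
  proof -
    have "ennreal (exp (- c * (cmod x)\<^sup>2))
        = ennreal K * ennreal (exp (- (a + b)) * exp (- (a * b / (a + b)) * (cmod x)\<^sup>2) * v)"
      using v unfolding ab K_def by (simp add: ennreal_mult'[symmetric] mult_exp_exp field_simps)
    also have "\<dots> \<le> ennreal K * (\<integral>\<^sup>+ y. ennreal (exp (- a * (cmod (x - y))\<^sup>2) * exp (- b * (cmod y)\<^sup>2)) \<partial>lborel)"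
      unfolding v_def using assms b by (intro mult_left_mono gaussian_product_integral_lower) auto
    finally show ?thesis .
  qed
  moreover have "K \<ge> 0" unfolding K_def using v by simp
  ultimately show thesis using b that by blast
qed

subsection \<open>The Berezin transform and the normalised kernels\<close>

locale fock_toeplitz =
  fixes \<alpha> :: real and \<phi> :: "complex \<Rightarrow> real"
  assumes alpha_pos: "\<alpha> > 0"
    and symbol_measurable[measurable]: "\<phi> \<in> borel_measurable lebesgue"
    and symbol_nonneg: "\<And>w. \<phi> w \<ge> 0"
    and symbol_I1: "cond_I1 \<alpha> \<phi>"
begin

abbreviation "T \<equiv> toeplitz \<alpha> \<phi>"
abbreviation "heat \<equiv> heat_transform \<alpha> \<phi>"

definition berezin :: "complex \<Rightarrow> real" where
  "berezin c = (\<alpha> / pi) * (\<integral>w. \<phi> w * exp (- \<alpha> * (cmod (w - c))\<^sup>2) \<partial>lebesgue)"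

lemma norm_fock_kernel_square_gauss_dens:
  "(cmod (fock_kernel \<alpha> c w))\<^sup>2 * gauss_dens \<alpha> w
     = (\<alpha> / pi) * exp (\<alpha> * (cmod c)\<^sup>2) * exp (- \<alpha> * (cmod (w - c))\<^sup>2)"
proof -
  have "(cmod (fock_kernel \<alpha> c w))\<^sup>2 * gauss_dens \<alpha> w
      = (\<alpha> / pi) * exp (- \<alpha> * (cmod w)\<^sup>2 + 2 * \<alpha> * Re (cnj c * w))"
    by (simp add: norm_fock_kernel gauss_dens_def power2_eq_square exp_add[symmetric] algebra_simps)
  also have "\<dots> = (\<alpha> / pi) * exp (\<alpha> * (cmod c)\<^sup>2) * exp (- \<alpha> * (cmod (w - c))\<^sup>2)"
    unfolding gauss_exponent_complete_square by (simp add: exp_add[symmetric] algebra_simps)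
  finally show ?thesis .
qed

lemma integrable_symbol_gauss: "integrable lebesgue (\<lambda>w. \<phi> w * exp (- \<alpha> * (cmod (w - c))\<^sup>2))"
proof -
  have "integrable lebesgue (\<lambda>w. \<bar>\<phi> w\<bar> * (cmod (fock_kernel \<alpha> c w))\<^sup>2 * gauss_dens \<alpha> w)"
    using symbol_I1 unfolding cond_I1_def by blast
  then have "integrable lebesgue (\<lambda>w. (pi / \<alpha>) * exp (- \<alpha> * (cmod c)\<^sup>2) *
      (\<bar>\<phi> w\<bar> * (cmod (fock_kernel \<alpha> c w))\<^sup>2 * gauss_dens \<alpha> w))"
    by (rule integrable_mult_right)
  moreover have "(pi / \<alpha>) * exp (- \<alpha> * (cmod c)\<^sup>2) *
      (\<bar>\<phi> w\<bar> * (cmod (fock_kernel \<alpha> c w))\<^sup>2 * gauss_dens \<alpha> w) = \<phi> w * exp (- \<alpha> * (cmod (w - c))\<^sup>2)" for w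
  proof -
    have "(pi / \<alpha>) * exp (- \<alpha> * (cmod c)\<^sup>2) *
        (\<bar>\<phi> w\<bar> * (cmod (fock_kernel \<alpha> c w))\<^sup>2 * gauss_dens \<alpha> w)
      = (pi / \<alpha>) * (\<alpha> / pi) * (exp (- \<alpha> * (cmod c)\<^sup>2) * exp (\<alpha> * (cmod c)\<^sup>2)) * (\<phi> w * exp (- \<alpha> * (cmod (w - c))\<^sup>2))"
      using symbol_nonneg[of w] by (simp add: mult.assoc norm_fock_kernel_square_gauss_dens)
    also have "\<dots> = \<phi> w * exp (- \<alpha> * (cmod (w - c))\<^sup>2)"
      using alpha_pos by (simp add: exp_add[symmetric])
    finally show ?thesis .
  qed
  ultimately show ?thesis by simp
qed

lemma berezin_nonneg: "berezin c \<ge> 0"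
  unfolding berezin_def using alpha_pos symbol_nonneg by (simp add: integral_nonneg_AE)

lemma heat_2_eq_berezin: "heat 2 c = ennreal (berezin c)"
proof -
  have "heat 2 c = (\<integral>\<^sup>+ w. ennreal ((\<alpha> / pi) * (\<phi> w * exp (- \<alpha> * (cmod (w - c))\<^sup>2))) \<partial>lebesgue)"
    unfolding heat_transform_def by (intro nn_integral_cong) (simp add: norm_minus_commute algebra_simps)
  also have "\<dots> = ennreal (berezin c)"
    unfolding berezin_def using alpha_pos symbol_nonneg
    by (subst nn_integral_eq_integral[OF integrable_mult_right[OF integrable_symbol_gauss]]) auto
  finally show ?thesis .
qed

lemma berezin_eq_heat_2: "berezin z = enn2real (heat 2 z)"
  unfolding heat_2_eq_berezin using berezin_nonneg by simp

definition normalized_kernel :: "complex \<Rightarrow> complex \<Rightarrow> complex" where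
  "normalized_kernel a = (\<lambda>z. fock_kernel \<alpha> a z * complex_of_real (exp (- \<alpha> * (cmod a)\<^sup>2 / 2)))"

lemma norm_normalized_kernel: "cmod (normalized_kernel a w) = exp (\<alpha> * Re (cnj a * w) - \<alpha> * (cmod a)\<^sup>2 / 2)"
  unfolding normalized_kernel_def norm_mult norm_of_real norm_fock_kernel abs_exp_cancel exp_add[symmetric] by simp

lemma norm_normalized_kernel_weighted: "cmod (normalized_kernel a z) * exp (- \<alpha> * (cmod z)\<^sup>2 / 2) = exp (- \<alpha> * (cmod (z - a))\<^sup>2 / 2)"
proof -
  have "cmod (normalized_kernel a z) * exp (- \<alpha> * (cmod z)\<^sup>2 / 2)
      = exp (- \<alpha> * (cmod z)\<^sup>2 / 2 + \<alpha> * Re (cnj a * z) - \<alpha> * (cmod a)\<^sup>2 / 2)"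
    by (simp add: norm_normalized_kernel exp_add[symmetric] exp_diff algebra_simps)
  also have "\<dots> = exp (- \<alpha> * (cmod (z - a))\<^sup>2 / 2)"
    using gauss_exponent_complete_square_half[of \<alpha> z a] by (simp add: algebra_simps)
  finally show ?thesis .
qed

lemma normalized_kernel_in_fock_inf: "normalized_kernel a \<in> fock_inf \<alpha>" and fock_inf_norm_normalized_kernel_le: "fock_inf_norm \<alpha> (normalized_kernel a) \<le> 1"
proof -
  have bound: "cmod (normalized_kernel a z) * exp (- \<alpha> * (cmod z)\<^sup>2 / 2) \<le> 1" for z
    unfolding norm_normalized_kernel_weighted using alpha_pos by simp
  show "normalized_kernel a \<in> fock_inf \<alpha>"
    by (rule fock_infI[OF _ bound]) (simp add: normalized_kernel_def fock_kernel_def holomorphic_intros)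
  show "fock_inf_norm \<alpha> (normalized_kernel a) \<le> 1"
    by (rule fock_inf_norm_le[OF bound])
qed

lemma toeplitz_normalized_kernel_diagonal: "cmod (T (normalized_kernel a) a) * exp (- \<alpha> * (cmod a)\<^sup>2 / 2) = berezin a"
proof -
  have "T (normalized_kernel a) a = (\<integral>w. complex_of_real ((\<alpha> / pi) * exp (\<alpha> * (cmod a)\<^sup>2 / 2) *
            (\<phi> w * exp (- \<alpha> * (cmod (w - a))\<^sup>2))) \<partial>lebesgue)"
    unfolding toeplitz_def
  proof (rule Bochner_Integration.integral_cong[OF refl])
    fix w
    have "fock_kernel \<alpha> a w * cnj (fock_kernel \<alpha> a w) = complex_of_real ((cmod (fock_kernel \<alpha> a w))\<^sup>2)"
      using complex_norm_square[of "fock_kernel \<alpha> a w"] by simp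
    then have "complex_of_real (\<phi> w * gauss_dens \<alpha> w) * normalized_kernel a w * cnj (fock_kernel \<alpha> a w)
        = complex_of_real (\<phi> w * exp (- \<alpha> * (cmod a)\<^sup>2 / 2) * ((cmod (fock_kernel \<alpha> a w))\<^sup>2 * gauss_dens \<alpha> w))"
      unfolding normalized_kernel_def by (simp add: algebra_simps)
    also have "\<dots> = complex_of_real ((\<alpha> / pi) * exp (\<alpha> * (cmod a)\<^sup>2 / 2) *
            (\<phi> w * exp (- \<alpha> * (cmod (w - a))\<^sup>2)))"
      unfolding norm_fock_kernel_square_gauss_dens by (simp add: algebra_simps exp_add[symmetric])
    finally show "complex_of_real (\<phi> w * gauss_dens \<alpha> w) * normalized_kernel a w * cnj (fock_kernel \<alpha> a w) = \<dots>" .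
  qed
  also have "\<dots> = complex_of_real ((\<alpha> / pi) * exp (\<alpha> * (cmod a)\<^sup>2 / 2) *
            (\<integral>w. \<phi> w * exp (- \<alpha> * (cmod (w - a))\<^sup>2) \<partial>lebesgue))"
    by (subst integral_complex_of_real) (simp only: integral_mult_right_zero)
  also have "\<dots> = complex_of_real (exp (\<alpha> * (cmod a)\<^sup>2 / 2) * berezin a)"
    by (simp add: berezin_def)
  finally have "cmod (T (normalized_kernel a) a) = exp (\<alpha> * (cmod a)\<^sup>2 / 2) * berezin a"
    using berezin_nonneg[of a] by (simp only: norm_of_real abs_of_nonneg) simp
  then show ?thesis by (simp add: exp_minus field_simps)
qed

lemma berezin_le_fock_inf_norm_toeplitz_normalized_kernel:
  "T (normalized_kernel a) \<in> fock_inf \<alpha> \<Longrightarrow> berezin a \<le> fock_inf_norm \<alpha> (T (normalized_kernel a))"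
  using fock_inf_norm_upper[of "T (normalized_kernel a)" \<alpha> a] toeplitz_normalized_kernel_diagonal[of a] by simp

lemma norm_toeplitz_normalized_kernel_le:
  "cmod (T (normalized_kernel a) z) \<le> exp (- \<alpha> * (cmod a)\<^sup>2 / 2 + \<alpha> * (cmod ((a + z) / 2))\<^sup>2) * berezin ((a + z) / 2)"
proof -
  define c where "c = (a + z) / 2"
  have pointwise: "norm (complex_of_real (\<phi> w * gauss_dens \<alpha> w) * normalized_kernel a w * cnj (fock_kernel \<alpha> z w))
     = exp (- \<alpha> * (cmod a)\<^sup>2 / 2 + \<alpha> * (cmod c)\<^sup>2) * ((\<alpha> / pi) * (\<phi> w * exp (- \<alpha> * (cmod (w - c))\<^sup>2)))" for w
  proof -
    have "norm (complex_of_real (\<phi> w * gauss_dens \<alpha> w) * normalized_kernel a w * cnj (fock_kernel \<alpha> z w))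
       = \<phi> w * (\<alpha> / pi) * exp (- \<alpha> * (cmod w)\<^sup>2 + 2 * \<alpha> * Re (cnj c * w) - \<alpha> * (cmod a)\<^sup>2 / 2)"
      using symbol_nonneg[of w] alpha_pos
      by (simp only: norm_mult norm_of_real complex_mod_cnj)
         (simp add: norm_normalized_kernel norm_fock_kernel gauss_dens_def c_def mult_exp_exp algebra_simps)
    also have "\<dots> = exp (- \<alpha> * (cmod a)\<^sup>2 / 2 + \<alpha> * (cmod c)\<^sup>2) * ((\<alpha> / pi) * (\<phi> w * exp (- \<alpha> * (cmod (w - c))\<^sup>2)))"
      unfolding gauss_exponent_complete_square by (simp add: exp_add[symmetric] exp_diff algebra_simps)
    finally show ?thesis .
  qed
  have "cmod (T (normalized_kernel a) z) \<le> (\<integral>w. norm (complex_of_real (\<phi> w * gauss_dens \<alpha> w) * normalized_kernel a w * cnj (fock_kernel \<alpha> z w)) \<partial>lebesgue)"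
    unfolding toeplitz_def by (rule integral_norm_bound)
  also have "\<dots> = exp (- \<alpha> * (cmod a)\<^sup>2 / 2 + \<alpha> * (cmod c)\<^sup>2) * berezin c"
    unfolding pointwise berezin_def by (simp only: integral_mult_right_zero)
  finally show ?thesis unfolding c_def .
qed

lemma toeplitz_normalized_kernel_tendsto_zero:
  assumes bounded: "\<And>a. berezin a \<le> B"
  shows "((\<lambda>a. T (normalized_kernel a) z) \<longlongrightarrow> 0) at_infinity"
proof (rule Lim_null_comparison)
  let ?C = "max B 0 * exp (3 * \<alpha> * (cmod z)\<^sup>2 / 4)"
  show "\<forall>\<^sub>F a in at_infinity. norm (T (normalized_kernel a) z) \<le> ?C * exp (- (\<alpha> / 8) * (norm a)\<^sup>2)"
  proof (intro always_eventually allI)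
    fix a
    have "norm (T (normalized_kernel a) z) \<le> exp (- \<alpha> * (cmod a)\<^sup>2 / 8 + 3 * \<alpha> * (cmod z)\<^sup>2 / 4) * max B 0"
      using alpha_pos bounded berezin_nonneg
      by (intro order_trans[OF norm_toeplitz_normalized_kernel_le] mult_mono exp_midpoint_decay)
         (auto simp: le_max_iff_disj)
    then show "norm (T (normalized_kernel a) z) \<le> ?C * exp (- (\<alpha> / 8) * (norm a)\<^sup>2)"
      by (simp add: mult_exp_exp algebra_simps)
  qed
  show "((\<lambda>a. ?C * exp (- (\<alpha> / 8) * (norm a)\<^sup>2)) \<longlongrightarrow> 0) at_infinity"
    using alpha_pos by (intro tendsto_mult_right_zero tendsto_exp_neg_norm_square_at_infinity) simp
qed

subsection \<open>Compactness forces the Berezin transform into \<open>C\<^sub>0\<close>\<close>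

lemma berezin_bounded_if_compact:
  assumes compact: "compact_on_fock_inf \<alpha> T"
  obtains B where "\<And>a. berezin a \<le> B"
proof (rule ccontr)
  assume "\<not> thesis"
  then have "\<forall>n::nat. \<exists>a. real n < berezin a"
    using that by (meson not_le)
  then obtain a where a: "\<And>n. real n < berezin (a n)"
    by (metis choice)
  obtain r g where r: "strict_mono r" and g: "g \<in> fock_inf \<alpha>"
    and lim: "(\<lambda>n. fock_inf_norm \<alpha> (\<lambda>z. T (normalized_kernel (a (r n))) z - g z)) \<longlonglongrightarrow> 0"
    using compact_on_fock_infE[OF compact normalized_kernel_in_fock_inf fock_inf_norm_normalized_kernel_le] by metis
  obtain n0 where n0: "\<And>n. n \<ge> n0 \<Longrightarrow> fock_inf_norm \<alpha> (\<lambda>z. T (normalized_kernel (a (r n))) z - g z) < 1"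
    using order_tendstoD(2)[OF lim, of 1] by (auto simp: eventually_sequentially)
  obtain m :: nat where m: "1 + fock_inf_norm \<alpha> g \<le> real m"
    using real_arch_simple by blast
  define n where "n = max n0 m"
  have kernel_image: "T (normalized_kernel b) \<in> fock_inf \<alpha>" for b
    by (rule compact_on_fock_inf_maps[OF compact normalized_kernel_in_fock_inf])
  have "real n \<le> real (r n)" using seq_suble[OF r, of n] by simp
  also have "\<dots> < berezin (a (r n))" by (rule a)
  also have "\<dots> \<le> fock_inf_norm \<alpha> (T (normalized_kernel (a (r n))))"
    by (rule berezin_le_fock_inf_norm_toeplitz_normalized_kernel[OF kernel_image])
  also have "\<dots> \<le> fock_inf_norm \<alpha> (\<lambda>z. T (normalized_kernel (a (r n))) z - g z) + fock_inf_norm \<alpha> g"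
    by (rule fock_inf_norm_triangle[OF kernel_image g])
  also have "\<dots> < 1 + fock_inf_norm \<alpha> g" using n0[of n] by (simp add: n_def)
  finally show False using m by (simp add: n_def)
qed

lemma berezin_vanishes_if_compact:
  assumes compact: "compact_on_fock_inf \<alpha> T"
  shows "(berezin \<longlongrightarrow> 0) at_infinity"
proof (rule ccontr)
  obtain B where B: "\<And>a. berezin a \<le> B"
    using berezin_bounded_if_compact[OF compact] by blast
  assume not_lim: "\<not> ?thesis"
  from not_lim obtain e a where e: "e > 0" and a: "filterlim a at_infinity sequentially"
    and far: "\<And>n. e \<le> dist (berezin (a n)) 0"
    by (rule not_tendsto_at_infinityE) fast
  obtain r g where r: "strict_mono r" and g: "g \<in> fock_inf \<alpha>"
    and lim: "(\<lambda>n. fock_inf_norm \<alpha> (\<lambda>z. T (normalized_kernel (a (r n))) z - g z)) \<longlonglongrightarrow> 0"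
    using compact_on_fock_infE[OF compact normalized_kernel_in_fock_inf fock_inf_norm_normalized_kernel_le] by metis
  have kernel_image: "T (normalized_kernel b) \<in> fock_inf \<alpha>" for b
    by (rule compact_on_fock_inf_maps[OF compact normalized_kernel_in_fock_inf])
  have "g z = 0" for z
  proof (rule LIMSEQ_unique)
    show "(\<lambda>n. T (normalized_kernel (a (r n))) z) \<longlonglongrightarrow> g z"
      by (rule fock_inf_norm_tendsto_imp_pointwise[OF kernel_image g lim])
    have "filterlim (\<lambda>n. a (r n)) at_infinity sequentially"
      by (rule filterlim_compose[OF a filterlim_subseq[OF r]])
    then show "(\<lambda>n. T (normalized_kernel (a (r n))) z) \<longlonglongrightarrow> 0"
      by (rule filterlim_compose[OF toeplitz_normalized_kernel_tendsto_zero[OF B]])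
  qed
  then have "(\<lambda>n. fock_inf_norm \<alpha> (T (normalized_kernel (a (r n))))) \<longlonglongrightarrow> 0"
    using lim by simp
  then have "\<forall>\<^sub>F n in sequentially. fock_inf_norm \<alpha> (T (normalized_kernel (a (r n)))) < e"
    using e by (rule order_tendstoD(2))
  then obtain n where "fock_inf_norm \<alpha> (T (normalized_kernel (a (r n)))) < e"
    by (auto simp: eventually_sequentially)
  moreover have "e \<le> berezin (a (r n))"
    using far[of "r n"] berezin_nonneg[of "a (r n)"] by simp
  ultimately show False
    using berezin_le_fock_inf_norm_toeplitz_normalized_kernel[OF kernel_image] by (meson not_le order_trans)
qed

subsection \<open>Heat transforms of a symbol with bounded Berezin transform\<close>

definition heat_density :: "real \<Rightarrow> complex \<Rightarrow> complex \<Rightarrow> real" where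
  "heat_density t z w = (\<alpha> / pi) * \<phi> w * exp (- \<alpha> * t * (cmod (z - w))\<^sup>2 / 2)"

lemma heat_density_nonneg: "heat_density t z w \<ge> 0"
  unfolding heat_density_def using alpha_pos symbol_nonneg by simp

lemma heat_density_measurable[measurable]: "heat_density t z \<in> borel_measurable lebesgue"
proof -
  have "(\<lambda>w. exp (- \<alpha> * t * (cmod (z - w))\<^sup>2 / 2)) \<in> borel_measurable lebesgue"
    by (rule continuous_on_imp_lebesgue_measurable) (intro continuous_intros; simp)
  then show ?thesis unfolding heat_density_def[abs_def] by measurable
qed

lemma heat_eq_nn_integral: "heat t z = (\<integral>\<^sup>+ w. ennreal (heat_density t z w) \<partial>lebesgue)"
  unfolding heat_transform_def heat_density_def ..

lemma integrable_heat_density: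
  assumes "heat t z < \<infinity>"
  shows "integrable lebesgue (heat_density t z)"
  using assms unfolding heat_eq_nn_integral
  by (intro integrableI_nn_integral_finite[where x="enn2real (heat t z)"])
     (auto simp: heat_density_nonneg heat_eq_nn_integral)

lemma heat_eq_integral:
  assumes "heat t z < \<infinity>"
  shows "enn2real (heat t z) = (\<integral>w. heat_density t z w \<partial>lebesgue)"
  unfolding heat_eq_nn_integral
  by (subst nn_integral_eq_integral[OF integrable_heat_density[OF assms]])
     (simp_all add: heat_density_nonneg integral_nonneg_AE)

lemma heat_antimono:
  assumes "u \<le> t" "0 \<le> u"
  shows "heat t z \<le> heat u z"
  unfolding heat_eq_nn_integral
proof (rule nn_integral_mono)
  fix w
  have "\<alpha> * u * (cmod (z - w))\<^sup>2 \<le> \<alpha> * t * (cmod (z - w))\<^sup>2"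
    using assms alpha_pos by (intro mult_right_mono mult_left_mono) auto
  then show "ennreal (heat_density t z w) \<le> ennreal (heat_density u z w)"
    unfolding heat_density_def using symbol_nonneg[of w] alpha_pos
    by (intro ennreal_leI mult_left_mono) auto
qed

lemma heat_density_far_le:
  assumes "2 * cmod z \<le> R" "R < cmod w"
  shows "heat_density 1 z w \<le> heat_density (1 / 4) 0 w"
proof -
  have "cmod w \<le> cmod (z - w) + cmod z" using norm_triangle_ineq4[of z "z - w"] by simp
  then have "cmod w / 2 \<le> cmod (z - w)" using assms by simp
  then have "(cmod w / 2)\<^sup>2 \<le> (cmod (z - w))\<^sup>2" by (rule power_mono) simp
  then have "\<alpha> * (1 / 4) * (cmod (0 - w))\<^sup>2 / 2 \<le> \<alpha> * 1 * (cmod (z - w))\<^sup>2 / 2"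
    using alpha_pos by (simp add: power_divide field_simps)
  then show ?thesis
    unfolding heat_density_def using alpha_pos symbol_nonneg[of w] by (intro mult_left_mono) auto
qed

text \<open>A Borel version of \<open>\<phi>\<close>, so that Tonelli's theorem on \<open>lborel \<Otimes> lborel\<close> applies.\<close>

definition \<psi> :: "complex \<Rightarrow> real" where
  "\<psi> = (SOME \<psi>. \<psi> \<in> borel_measurable lborel \<and> (\<forall>w. \<psi> w \<ge> 0) \<and> (AE w in lborel. \<phi> w = \<psi> w))"

lemma psi_exists: "\<exists>\<psi>. \<psi> \<in> borel_measurable lborel \<and> (\<forall>w. \<psi> w \<ge> 0) \<and> (AE w in lborel. \<phi> w = \<psi> w)"
proof -
  obtain g where g: "g \<in> borel_measurable lborel" "AE x in lborel. \<phi> x = g x"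
    using completion_ex_borel_measurable_real[OF symbol_measurable] by blast
  have "(\<lambda>x. max 0 (g x)) \<in> borel_measurable lborel" using g(1) by measurable
  moreover have "AE x in lborel. \<phi> x = max 0 (g x)"
    using g(2) by eventually_elim (metis symbol_nonneg max.absorb2)
  ultimately show ?thesis by (intro exI[of _ "\<lambda>x. max 0 (g x)"]) auto
qed

lemma psi_measurable[measurable]: "\<psi> \<in> borel_measurable lborel"
  and psi_nonneg: "\<psi> w \<ge> 0"
  and AE_symbol_eq_psi: "AE w in lborel. \<phi> w = \<psi> w"
  using someI_ex[OF psi_exists] unfolding \<psi>_def[symmetric] by auto

lemma heat_eq_nn_integral_lborel:
  "heat t z = (\<integral>\<^sup>+ w. ennreal ((\<alpha> / pi) * \<psi> w * exp (- \<alpha> * t * (cmod (z - w))\<^sup>2 / 2)) \<partial>lborel)"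
  unfolding heat_transform_def nn_integral_completion
  by (rule nn_integral_cong_AE) (use AE_symbol_eq_psi in \<open>eventually_elim, simp\<close>)

lemma nn_integral_gaussian_average_berezin:
  "(\<integral>\<^sup>+ w. ennreal ((\<alpha> / pi) * \<psi> w) *
      (\<integral>\<^sup>+ y. ennreal (exp (- \<alpha> * (cmod (z - w - y))\<^sup>2) * exp (- b * (cmod y)\<^sup>2)) \<partial>lborel) \<partial>lborel)
   = (\<integral>\<^sup>+ y. ennreal (exp (- b * (cmod y)\<^sup>2) * berezin (z - y)) \<partial>lborel)"
proof -
  have diff_swap: "\<And>a b c :: complex. a - b - c = a - c - b" by simp
  let ?G = "\<lambda>y w. ennreal ((\<alpha> / pi) * \<psi> w * exp (- \<alpha> * (cmod (z - y - w))\<^sup>2)) * ennreal (exp (- b * (cmod y)\<^sup>2))"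
  have "(\<integral>\<^sup>+ w. ennreal ((\<alpha> / pi) * \<psi> w) *
      (\<integral>\<^sup>+ y. ennreal (exp (- \<alpha> * (cmod (z - w - y))\<^sup>2) * exp (- b * (cmod y)\<^sup>2)) \<partial>lborel) \<partial>lborel)
      = (\<integral>\<^sup>+ w. (\<integral>\<^sup>+ y. ?G y w \<partial>lborel) \<partial>lborel)"
  proof (intro nn_integral_cong)
    fix w
    have "ennreal ((\<alpha> / pi) * \<psi> w) *
        (\<integral>\<^sup>+ y. ennreal (exp (- \<alpha> * (cmod (z - w - y))\<^sup>2) * exp (- b * (cmod y)\<^sup>2)) \<partial>lborel)
      = (\<integral>\<^sup>+ y. ennreal ((\<alpha> / pi) * \<psi> w) * ennreal (exp (- \<alpha> * (cmod (z - w - y))\<^sup>2) * exp (- b * (cmod y)\<^sup>2)) \<partial>lborel)"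
      by (rule nn_integral_cmult[symmetric]) measurable
    also have "\<dots> = (\<integral>\<^sup>+ y. ?G y w \<partial>lborel)"
      using alpha_pos psi_nonneg[of w]
      by (intro nn_integral_cong) (simp add: ennreal_mult'[symmetric] ennreal_mult''[symmetric] mult_ac diff_swap)
    finally show "ennreal ((\<alpha> / pi) * \<psi> w) *
        (\<integral>\<^sup>+ y. ennreal (exp (- \<alpha> * (cmod (z - w - y))\<^sup>2) * exp (- b * (cmod y)\<^sup>2)) \<partial>lborel)
      = (\<integral>\<^sup>+ y. ?G y w \<partial>lborel)" .
  qed
  also have "\<dots> = (\<integral>\<^sup>+ y. (\<integral>\<^sup>+ w. ?G y w \<partial>lborel) \<partial>lborel)"
    by (rule lborel_pair.Fubini'[symmetric]) measurable
  also have "\<dots> = (\<integral>\<^sup>+ y. ennreal (exp (- b * (cmod y)\<^sup>2) * berezin (z - y)) \<partial>lborel)"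
  proof (intro nn_integral_cong)
    fix y
    have "(\<integral>\<^sup>+ w. ?G y w \<partial>lborel)
        = (\<integral>\<^sup>+ w. ennreal ((\<alpha> / pi) * \<psi> w * exp (- \<alpha> * (cmod (z - y - w))\<^sup>2)) \<partial>lborel)
          * ennreal (exp (- b * (cmod y)\<^sup>2))"
      by (rule nn_integral_multc) measurable
    also have "\<dots> = heat 2 (z - y) * ennreal (exp (- b * (cmod y)\<^sup>2))"
      unfolding heat_eq_nn_integral_lborel by simp
    finally show "(\<integral>\<^sup>+ w. ?G y w \<partial>lborel) = ennreal (exp (- b * (cmod y)\<^sup>2) * berezin (z - y))"
      unfolding heat_2_eq_berezin by (simp add: ennreal_mult' berezin_nonneg mult.commute)
  qed
  finally show ?thesis .
qed

lemma heat_le_gaussian_average_berezin: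
  assumes "0 < t" "t < 2"
  obtains b K where "b > 0" "K \<ge> 0"
    "\<And>z. heat t z \<le> ennreal K * (\<integral>\<^sup>+ y. ennreal (exp (- b * (cmod y)\<^sup>2) * berezin (z - y)) \<partial>lborel)"
proof -
  define c where "c = \<alpha> * t / 2"
  obtain b K where b: "b > 0" and K: "K \<ge> 0"
    and conv: "\<And>x::complex. ennreal (exp (- c * (cmod x)\<^sup>2))
       \<le> ennreal K * (\<integral>\<^sup>+ y. ennreal (exp (- \<alpha> * (cmod (x - y))\<^sup>2) * exp (- b * (cmod y)\<^sup>2)) \<partial>lborel)"
    using gaussian_le_convolution[of c \<alpha>] assms alpha_pos unfolding c_def by auto
  have "heat t z \<le> ennreal K * (\<integral>\<^sup>+ y. ennreal (exp (- b * (cmod y)\<^sup>2) * berezin (z - y)) \<partial>lborel)" for z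
  proof -
    have "heat t z = (\<integral>\<^sup>+ w. ennreal ((\<alpha> / pi) * \<psi> w) * ennreal (exp (- c * (cmod (z - w))\<^sup>2)) \<partial>lborel)"
      unfolding heat_eq_nn_integral_lborel c_def using alpha_pos psi_nonneg
      by (intro nn_integral_cong) (simp add: ennreal_mult'[symmetric] algebra_simps)
    also have "\<dots> \<le> (\<integral>\<^sup>+ w. ennreal K * (ennreal ((\<alpha> / pi) * \<psi> w) *
        (\<integral>\<^sup>+ y. ennreal (exp (- \<alpha> * (cmod (z - w - y))\<^sup>2) * exp (- b * (cmod y)\<^sup>2)) \<partial>lborel)) \<partial>lborel)"
      by (rule nn_integral_mono, subst mult.left_commute, rule mult_left_mono[OF conv]) simp
    also have "\<dots> = ennreal K * (\<integral>\<^sup>+ w. ennreal ((\<alpha> / pi) * \<psi> w) *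
        (\<integral>\<^sup>+ y. ennreal (exp (- \<alpha> * (cmod (z - w - y))\<^sup>2) * exp (- b * (cmod y)\<^sup>2)) \<partial>lborel) \<partial>lborel)"
      by (rule nn_integral_cmult) measurable
    also have "\<dots> = ennreal K * (\<integral>\<^sup>+ y. ennreal (exp (- b * (cmod y)\<^sup>2) * berezin (z - y)) \<partial>lborel)"
      by (simp only: nn_integral_gaussian_average_berezin)
    finally show ?thesis .
  qed
  with b K show thesis by (rule that)
qed

context
  fixes B :: real
  assumes berezin_le: "\<And>a. berezin a \<le> B"
begin

lemma heat_finite:
  assumes "t > 0"
  shows "heat t z < \<infinity>"
proof (cases "t \<ge> 2")
  case True
  then have "heat t z \<le> heat 2 z" by (intro heat_antimono) auto
  then show ?thesis unfolding heat_2_eq_berezin by (simp add: le_less_trans)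
next
  case False
  obtain b K where b: "b > 0" and "K \<ge> 0"
    and le: "\<And>z. heat t z \<le> ennreal K * (\<integral>\<^sup>+ y. ennreal (exp (- b * (cmod y)\<^sup>2) * berezin (z - y)) \<partial>lborel)"
    using heat_le_gaussian_average_berezin[of t] assms False by auto
  have "(\<integral>\<^sup>+ y. ennreal (exp (- b * (cmod y)\<^sup>2) * berezin (z - y)) \<partial>lborel)
       \<le> (\<integral>\<^sup>+ y. ennreal (exp (- b * (cmod y)\<^sup>2)) * ennreal (max B 0) \<partial>lborel)"
    by (intro nn_integral_mono) (simp add: ennreal_mult''[symmetric] berezin_le le_max_iff_disj)
  also have "\<dots> = (\<integral>\<^sup>+ y. ennreal (exp (- b * (cmod y)\<^sup>2)) \<partial>lborel) * ennreal (max B 0)"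
    by (rule nn_integral_multc) measurable
  also have "\<dots> < \<infinity>"
    using nn_integral_gaussian_complex_finite[OF b] by (simp add: ennreal_mult_less_top)
  finally show ?thesis
    using le[of z] by (simp add: ennreal_mult_less_top le_less_trans)
qed

lemma heat_continuous:
  assumes t: "t > 0"
  shows "continuous_on UNIV (\<lambda>z. enn2real (heat t z))"
  unfolding continuous_on_sequentially
proof (intro allI ballI impI, elim conjE)
  fix x :: "nat \<Rightarrow> complex" and a :: complex
  assume lim: "x \<longlonglongrightarrow> a"
  have "Bseq (\<lambda>n. x n - a)"
    by (rule convergent_imp_Bseq[OF convergentI[OF tendsto_diff[OF lim tendsto_const]]])
  then obtain D where D: "\<And>n. cmod (x n - a) \<le> D" by (rule BseqE) blast
  define g where "g w = exp (\<alpha> * t * D\<^sup>2 / 2) * heat_density (t / 2) a w" for w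
  have "integrable lebesgue g"
    unfolding g_def using heat_finite t by (intro integrable_mult_right integrable_heat_density) simp
  then have "(\<lambda>n. \<integral>w. heat_density t (x n) w \<partial>lebesgue) \<longlonglongrightarrow> (\<integral>w. heat_density t a w \<partial>lebesgue)"
  proof (rule integral_dominated_convergence[OF heat_density_measurable heat_density_measurable])
    show "AE w in lebesgue. (\<lambda>n. heat_density t (x n) w) \<longlonglongrightarrow> heat_density t a w"
      unfolding heat_density_def by (intro AE_I2 tendsto_intros lim) simp
    fix n
    show "AE w in lebesgue. norm (heat_density t (x n) w) \<le> g w"
    proof (intro AE_I2)
      fix w
      have "exp (- \<alpha> * t * (cmod (x n - w))\<^sup>2 / 2)
          \<le> exp (\<alpha> * t * D\<^sup>2 / 2) * exp (- \<alpha> * (t / 2) * (cmod (a - w))\<^sup>2 / 2)"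
        using gauss_shift_le[where c="\<alpha> * t" and x="x n" and a=a and D=D and w=w] alpha_pos t D by (simp add: mult_ac)
      then have "heat_density t (x n) w
          \<le> (\<alpha> / pi) * \<phi> w * (exp (\<alpha> * t * D\<^sup>2 / 2) * exp (- \<alpha> * (t / 2) * (cmod (a - w))\<^sup>2 / 2))"
        unfolding heat_density_def using alpha_pos symbol_nonneg[of w] by (intro mult_left_mono) auto
      then show "norm (heat_density t (x n) w) \<le> g w"
        unfolding g_def using heat_density_nonneg[of t "x n" w] by (simp add: heat_density_def mult_ac)
    qed
  qed
  then show "((\<lambda>z. enn2real (heat t z)) \<circ> x) \<longlonglongrightarrow> enn2real (heat t a)"
    using heat_eq_integral heat_finite t by (simp add: o_def)
qed

lemma berezin_continuous: "continuous_on UNIV berezin"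
  using heat_continuous[of 2] by (simp add: berezin_eq_heat_2[abs_def])

lemma gaussian_berezin_le: "norm (exp (- b * (cmod y)\<^sup>2) * berezin (z - y)) \<le> max B 0 * exp (- b * (cmod y)\<^sup>2)"
  using berezin_le[of "z - y"] berezin_nonneg[of "z - y"]
  by (simp add: abs_mult mult.commute mult_left_mono le_max_iff_disj)

lemma integrable_gaussian_berezin:
  assumes "b > 0"
  shows "integrable lborel (\<lambda>y. exp (- b * (cmod y)\<^sup>2) * berezin (z - y))"
proof (rule Bochner_Integration.integrable_bound)
  show "integrable lborel (\<lambda>y::complex. max B 0 * exp (- b * (cmod y)\<^sup>2))"
    by (intro integrable_mult_right integrable_gaussian_complex assms)
  have [measurable]: "berezin \<in> borel_measurable borel"
    by (rule borel_measurable_continuous_onI[OF berezin_continuous])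
  show "(\<lambda>y. exp (- b * (cmod y)\<^sup>2) * berezin (z - y)) \<in> borel_measurable lborel"
    by measurable
  show "AE y in lborel. norm (exp (- b * (cmod y)\<^sup>2) * berezin (z - y)) \<le> norm (max B 0 * exp (- b * (cmod y)\<^sup>2))"
    using gaussian_berezin_le by simp
qed

lemma gaussian_average_berezin_tendsto_zero:
  assumes b: "b > 0" and vanish: "(berezin \<longlongrightarrow> 0) at_infinity"
  shows "((\<lambda>z. \<integral>y. exp (- b * (cmod y)\<^sup>2) * berezin (z - y) \<partial>lborel) \<longlongrightarrow> 0) at_infinity"
proof (rule tendsto_at_infinity_sequentially)
  fix X :: "nat \<Rightarrow> complex"
  assume X: "filterlim X at_infinity sequentially"
  have [measurable]: "berezin \<in> borel_measurable borel"
    by (rule borel_measurable_continuous_onI[OF berezin_continuous])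
  have "(\<lambda>n. \<integral>y. exp (- b * (cmod y)\<^sup>2) * berezin (X n - y) \<partial>lborel) \<longlonglongrightarrow> integral\<^sup>L lborel (\<lambda>y::complex. 0::real)"
  proof (rule integral_dominated_convergence[where w="\<lambda>y. max B 0 * exp (- b * (cmod y)\<^sup>2)"])
    show "integrable lborel (\<lambda>y::complex. max B 0 * exp (- b * (cmod y)\<^sup>2))"
      by (intro integrable_mult_right integrable_gaussian_complex b)
    show "AE y in lborel. (\<lambda>n. exp (- b * (cmod y)\<^sup>2) * berezin (X n - y)) \<longlonglongrightarrow> 0"
    proof (intro AE_I2 tendsto_mult_right_zero)
      fix y
      have "filterlim (\<lambda>n. X n + (- y)) at_infinity sequentially"
        by (rule tendsto_add_filterlim_at_infinity'[OF X tendsto_const])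
      then show "(\<lambda>n. berezin (X n - y)) \<longlonglongrightarrow> 0"
        using filterlim_compose[OF vanish] by simp
    qed
    show "AE y in lborel. norm (exp (- b * (cmod y)\<^sup>2) * berezin (X n - y)) \<le> max B 0 * exp (- b * (cmod y)\<^sup>2)"
      for n using gaussian_berezin_le by simp
  qed measurable
  then show "(\<lambda>n. \<integral>y. exp (- b * (cmod y)\<^sup>2) * berezin (X n - y) \<partial>lborel) \<longlonglongrightarrow> 0"
    by simp
qed

lemma heat_vanishes:
  assumes vanish: "(berezin \<longlongrightarrow> 0) at_infinity" and t: "t > 0"
  shows "((\<lambda>z. enn2real (heat t z)) \<longlongrightarrow> 0) at_infinity"
proof (cases "t \<ge> 2")
  case True
  have le_berezin: "enn2real (heat t z) \<le> berezin z" for z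
    unfolding berezin_eq_heat_2 using True heat_finite by (intro enn2real_mono heat_antimono) auto
  show ?thesis
    by (rule tendsto_sandwich[OF _ _ tendsto_const vanish]) (simp_all add: le_berezin)
next
  case False
  obtain b K where b: "b > 0" and K: "K \<ge> 0"
    and le: "\<And>z. heat t z \<le> ennreal K * (\<integral>\<^sup>+ y. ennreal (exp (- b * (cmod y)\<^sup>2) * berezin (z - y)) \<partial>lborel)"
    using heat_le_gaussian_average_berezin[of t] t False by auto
  define \<Phi> where "\<Phi> z = (\<integral>y. exp (- b * (cmod y)\<^sup>2) * berezin (z - y) \<partial>lborel)" for z
  have le_Phi: "enn2real (heat t z) \<le> K * \<Phi> z" for z
  proof -
    have "(\<integral>\<^sup>+ y. ennreal (exp (- b * (cmod y)\<^sup>2) * berezin (z - y)) \<partial>lborel) = ennreal (\<Phi> z)"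
      unfolding \<Phi>_def by (rule nn_integral_eq_integral[OF integrable_gaussian_berezin[OF b]]) (simp add: berezin_nonneg)
    then have "heat t z \<le> ennreal (K * \<Phi> z)"
      using le[of z] by (simp only: ennreal_mult'[OF K])
    moreover have "\<Phi> z \<ge> 0" unfolding \<Phi>_def by (rule integral_nonneg_AE) (simp add: berezin_nonneg)
    ultimately show ?thesis using K by (simp add: enn2real_leI)
  qed
  have lim: "((\<lambda>z. K * \<Phi> z) \<longlongrightarrow> 0) at_infinity"
    unfolding \<Phi>_def by (intro tendsto_mult_right_zero gaussian_average_berezin_tendsto_zero b vanish)
  show ?thesis
    by (rule tendsto_sandwich[OF _ _ tendsto_const lim]) (simp_all add: le_Phi)
qed

lemma heat_in_C0: "(berezin \<longlongrightarrow> 0) at_infinity \<Longrightarrow> t > 0 \<Longrightarrow> in_C0 (heat t)"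
  unfolding in_C0_def by (intro conjI allI heat_finite heat_continuous heat_vanishes)

end

theorem heat_in_C0_if_compact:
  assumes "compact_on_fock_inf \<alpha> T" "t > 0"
  shows "in_C0 (heat t)"
proof -
  obtain B where "\<And>a. berezin a \<le> B"
    using berezin_bounded_if_compact[OF assms(1)] by blast
  then show ?thesis
    by (rule heat_in_C0[OF _ berezin_vanishes_if_compact[OF assms(1)] assms(2)])
qed

subsection \<open>Toeplitz operators of a symbol whose heat transforms lie in \<open>C\<^sub>0\<close>\<close>

definition toeplitz_integrand :: "(complex \<Rightarrow> complex) \<Rightarrow> complex \<Rightarrow> complex \<Rightarrow> complex" where
  "toeplitz_integrand h z w = complex_of_real (\<phi> w * gauss_dens \<alpha> w) * h w * cnj (fock_kernel \<alpha> z w)"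

lemma toeplitz_eq_integral: "T h z = integral\<^sup>L lebesgue (toeplitz_integrand h z)"
  unfolding toeplitz_def toeplitz_integrand_def ..

lemma norm_toeplitz_integrand:
  "norm (toeplitz_integrand h z w)
     = exp (\<alpha> * (cmod z)\<^sup>2 / 2) * (cmod (h w) * exp (- \<alpha> * (cmod w)\<^sup>2 / 2) * heat_density 1 z w)"
proof -
  have "norm (toeplitz_integrand h z w)
      = \<phi> w * (\<alpha> / pi) * cmod (h w) * exp (- \<alpha> * (cmod w)\<^sup>2 / 2)
        * exp (- \<alpha> * (cmod w)\<^sup>2 / 2 + \<alpha> * Re (cnj z * w))"
    unfolding toeplitz_integrand_def using symbol_nonneg[of w] alpha_pos
    by (simp only: norm_mult norm_of_real complex_mod_cnj)
       (simp add: norm_fock_kernel gauss_dens_def abs_mult mult_exp_exp mult_ac)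
  also have "- \<alpha> * (cmod w)\<^sup>2 / 2 + \<alpha> * Re (cnj z * w) = \<alpha> * (cmod z)\<^sup>2 / 2 + (- \<alpha> * 1 * (cmod (z - w))\<^sup>2 / 2)"
    using gauss_exponent_complete_square_half[of \<alpha> w z] by (simp add: norm_minus_commute)
  finally show ?thesis
    by (simp only: exp_add) (simp add: heat_density_def mult_ac)
qed

lemma toeplitz_integrand_measurable:
  assumes "continuous_on UNIV h"
  shows "toeplitz_integrand h z \<in> borel_measurable lebesgue"
proof -
  have "(\<lambda>w. gauss_dens \<alpha> w) \<in> borel_measurable lebesgue"
    unfolding gauss_dens_def by (rule continuous_on_imp_lebesgue_measurable) (intro continuous_intros)
  moreover have "(\<lambda>w. h w * cnj (fock_kernel \<alpha> z w)) \<in> borel_measurable lebesgue"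
    unfolding cnj_fock_kernel by (rule continuous_on_imp_lebesgue_measurable) (intro continuous_intros assms)
  ultimately show ?thesis
    unfolding toeplitz_integrand_def[abs_def] by (simp add: mult.assoc) measurable
qed

lemma toeplitz_integrand_translate:
  "toeplitz_integrand h (z + u) w = toeplitz_integrand h z w * exp (complex_of_real \<alpha> * u * cnj w)"
  unfolding toeplitz_integrand_def cnj_fock_kernel by (simp add: exp_add[symmetric] algebra_simps)

text \<open>The factor \<open>e\<^bsup>\<beta>|w|\<^esup>\<close> coming from \<open>|e\<^sup>v - 1| \<le> |v| e\<^bsup>|v|\<^esup>\<close> is absorbed by
  halving the Gaussian, at the price of the constant \<open>e\<^bsup>\<beta>\<^sup>2/\<alpha>\<^esup>\<close>.\<close>

lemma toeplitz_difference_quotient_dominated: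
  assumes h: "h \<in> fock_inf \<alpha>"
  obtains K where "\<And>u w. u \<noteq> 0 \<Longrightarrow> cmod u \<le> D \<Longrightarrow>
    norm (toeplitz_integrand h z0 w * ((exp (complex_of_real \<alpha> * u * cnj w) - 1) / u))
      \<le> K * heat_density (1 / 2) z0 w"
proof -
  define C where "C = fock_inf_norm \<alpha> h"
  define \<beta> where "\<beta> = 1 + \<alpha> * D"
  define E0 where "E0 = exp (\<alpha> * (cmod z0)\<^sup>2 / 2)"
  have C0: "C \<ge> 0" unfolding C_def by (rule fock_inf_norm_nonneg[OF h])
  have "norm (toeplitz_integrand h z0 w * ((exp (complex_of_real \<alpha> * u * cnj w) - 1) / u))
      \<le> (E0 * C * \<alpha> * exp (\<beta> * cmod z0) * exp (\<beta>\<^sup>2 / \<alpha>)) * heat_density (1 / 2) z0 w"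
    if u: "u \<noteq> 0" "cmod u \<le> D" for u w
  proof -
    define S where "S = cmod (z0 - w)"
    define P where "P = (\<alpha> / pi) * \<phi> w"
    have P0: "P \<ge> 0" unfolding P_def using alpha_pos symbol_nonneg[of w] by simp
    have integrand: "norm (toeplitz_integrand h z0 w) \<le> E0 * P * C * exp (- \<alpha> * S\<^sup>2 / 2)"
    proof -
      have "norm (toeplitz_integrand h z0 w) = E0 * P * (cmod (h w) * exp (- \<alpha> * (cmod w)\<^sup>2 / 2)) * exp (- \<alpha> * S\<^sup>2 / 2)"
        unfolding norm_toeplitz_integrand E0_def P_def S_def heat_density_def by (simp add: mult_ac)
      also have "\<dots> \<le> E0 * P * C * exp (- \<alpha> * S\<^sup>2 / 2)"
        unfolding C_def using fock_inf_norm_upper[OF h, of w] P0 E0_def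
        by (intro mult_right_mono mult_left_mono) auto
      finally show ?thesis .
    qed
    have quotient: "norm ((exp (complex_of_real \<alpha> * u * cnj w) - 1) / u) \<le> \<alpha> * exp (\<beta> * S) * exp (\<beta> * cmod z0)"
      unfolding \<beta>_def S_def using alpha_pos u by (intro norm_exp_difference_quotient_le) auto
    have gauss: "exp (\<beta> * S) * exp (- \<alpha> * S\<^sup>2 / 2) \<le> exp (\<beta>\<^sup>2 / \<alpha>) * exp (- \<alpha> * S\<^sup>2 / 4)"
      using linear_minus_quadratic_le[OF alpha_pos, of \<beta> S] by (simp add: mult_exp_exp)
    have "norm (toeplitz_integrand h z0 w * ((exp (complex_of_real \<alpha> * u * cnj w) - 1) / u))
        \<le> (E0 * P * C * exp (- \<alpha> * S\<^sup>2 / 2)) * (\<alpha> * exp (\<beta> * S) * exp (\<beta> * cmod z0))"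
      unfolding norm_mult by (rule mult_mono[OF integrand quotient]) (use P0 C0 E0_def in auto)
    also have "\<dots> = (E0 * C * \<alpha> * exp (\<beta> * cmod z0)) * P * (exp (\<beta> * S) * exp (- \<alpha> * S\<^sup>2 / 2))"
      by (simp add: mult_ac)
    also have "\<dots> \<le> (E0 * C * \<alpha> * exp (\<beta> * cmod z0)) * P * (exp (\<beta>\<^sup>2 / \<alpha>) * exp (- \<alpha> * S\<^sup>2 / 4))"
      using P0 C0 alpha_pos unfolding E0_def by (intro mult_left_mono gauss) auto
    also have "\<dots> = (E0 * C * \<alpha> * exp (\<beta> * cmod z0) * exp (\<beta>\<^sup>2 / \<alpha>)) * heat_density (1 / 2) z0 w"
      unfolding heat_density_def P_def S_def by (simp add: mult_ac)
    finally show ?thesis .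
  qed
  then show thesis by (rule that)
qed

context
  assumes heat_C0: "\<And>t. t > 0 \<Longrightarrow> in_C0 (heat t)"
begin

lemma integrable_heat_density_of_C0: "t > 0 \<Longrightarrow> integrable lebesgue (heat_density t z)"
  by (rule integrable_heat_density) (use heat_C0 in \<open>auto simp: in_C0_def\<close>)

lemma heat_eq_integral_of_C0: "t > 0 \<Longrightarrow> enn2real (heat t z) = (\<integral>w. heat_density t z w \<partial>lebesgue)"
  by (rule heat_eq_integral) (use heat_C0 in \<open>auto simp: in_C0_def\<close>)

lemma integrable_weighted_heat_density:
  assumes h: "h \<in> fock_inf \<alpha>"
  shows "integrable lebesgue (\<lambda>w. cmod (h w) * exp (- \<alpha> * (cmod w)\<^sup>2 / 2) * heat_density 1 z w)"
proof (rule Bochner_Integration.integrable_bound)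
  show "integrable lebesgue (\<lambda>w. fock_inf_norm \<alpha> h * heat_density 1 z w)"
    by (intro integrable_mult_right integrable_heat_density_of_C0) simp
  have "(\<lambda>w. cmod (h w) * exp (- \<alpha> * (cmod w)\<^sup>2 / 2)) \<in> borel_measurable lebesgue"
    by (rule continuous_on_imp_lebesgue_measurable) (auto intro!: continuous_intros fock_inf_continuous[OF h])
  then show "(\<lambda>w. cmod (h w) * exp (- \<alpha> * (cmod w)\<^sup>2 / 2) * heat_density 1 z w) \<in> borel_measurable lebesgue"
    by measurable
  show "AE w in lebesgue. norm (cmod (h w) * exp (- \<alpha> * (cmod w)\<^sup>2 / 2) * heat_density 1 z w)
      \<le> norm (fock_inf_norm \<alpha> h * heat_density 1 z w)"
    using fock_inf_norm_upper[OF h] heat_density_nonneg fock_inf_norm_nonneg[OF h]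
    by (intro AE_I2) (simp add: abs_mult mult_right_mono)
qed

lemma integrable_toeplitz_integrand:
  assumes h: "h \<in> fock_inf \<alpha>"
  shows "integrable lebesgue (toeplitz_integrand h z)"
proof (rule Bochner_Integration.integrable_bound)
  show "integrable lebesgue (\<lambda>w. exp (\<alpha> * (cmod z)\<^sup>2 / 2) *
      (cmod (h w) * exp (- \<alpha> * (cmod w)\<^sup>2 / 2) * heat_density 1 z w))"
    by (intro integrable_mult_right integrable_weighted_heat_density h)
  show "toeplitz_integrand h z \<in> borel_measurable lebesgue"
    by (rule toeplitz_integrand_measurable[OF fock_inf_continuous[OF h]])
  show "AE w in lebesgue. norm (toeplitz_integrand h z w) \<le> norm (exp (\<alpha> * (cmod z)\<^sup>2 / 2) *
      (cmod (h w) * exp (- \<alpha> * (cmod w)\<^sup>2 / 2) * heat_density 1 z w))"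
    by (intro AE_I2) (simp only: norm_toeplitz_integrand real_norm_def abs_ge_self)
qed

lemma toeplitz_weighted_le:
  "cmod (T h z) * exp (- \<alpha> * (cmod z)\<^sup>2 / 2)
     \<le> (\<integral>w. cmod (h w) * exp (- \<alpha> * (cmod w)\<^sup>2 / 2) * heat_density 1 z w \<partial>lebesgue)"
proof -
  have "cmod (T h z) \<le> (\<integral>w. norm (toeplitz_integrand h z w) \<partial>lebesgue)"
    unfolding toeplitz_eq_integral by (rule integral_norm_bound)
  also have "\<dots> = exp (\<alpha> * (cmod z)\<^sup>2 / 2) *
      (\<integral>w. cmod (h w) * exp (- \<alpha> * (cmod w)\<^sup>2 / 2) * heat_density 1 z w \<partial>lebesgue)"
    by (simp only: norm_toeplitz_integrand integral_mult_right_zero)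
  finally show ?thesis by (simp add: exp_minus field_simps)
qed

lemma toeplitz_diff:
  assumes "f \<in> fock_inf \<alpha>" "g \<in> fock_inf \<alpha>"
  shows "T f z - T g z = T (\<lambda>w. f w - g w) z"
proof -
  have "T f z - T g z = integral\<^sup>L lebesgue (\<lambda>w. toeplitz_integrand f z w - toeplitz_integrand g z w)"
    unfolding toeplitz_eq_integral
    by (rule Bochner_Integration.integral_diff[symmetric]) (intro integrable_toeplitz_integrand assms)+
  also have "\<dots> = T (\<lambda>w. f w - g w) z"
    unfolding toeplitz_eq_integral toeplitz_integrand_def by (simp add: algebra_simps)
  finally show ?thesis .
qed

lemma toeplitz_difference_quotient_eq:
  assumes h: "h \<in> fock_inf \<alpha>"
  shows "(T h (z0 + u) - T h z0) / u
    = (\<integral>w. toeplitz_integrand h z0 w * ((exp (complex_of_real \<alpha> * u * cnj w) - 1) / u) \<partial>lebesgue)"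
proof -
  have "T h (z0 + u) - T h z0
      = (\<integral>w. toeplitz_integrand h z0 w * (exp (complex_of_real \<alpha> * u * cnj w) - 1) \<partial>lebesgue)"
    unfolding toeplitz_eq_integral
    by (subst Bochner_Integration.integral_diff[symmetric])
       (use integrable_toeplitz_integrand[OF h] toeplitz_integrand_translate[of h z0 u] in
         \<open>simp_all add: algebra_simps\<close>)
  then show ?thesis
    by (simp add: integral_divide_zero[symmetric] del: integral_divide_zero)
qed

lemma toeplitz_has_field_derivative:
  assumes h: "h \<in> fock_inf \<alpha>"
  shows "(T h has_field_derivative
           integral\<^sup>L lebesgue (\<lambda>w. toeplitz_integrand h z0 w * (complex_of_real \<alpha> * cnj w))) (at z0)"
  unfolding has_field_derivative_iff tendsto_at_iff_sequentially
proof (intro allI impI)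
  fix X :: "nat \<Rightarrow> complex"
  assume X: "\<forall>i. X i \<in> UNIV - {z0}" and X_lim: "X \<longlonglongrightarrow> z0"
  let ?I = "toeplitz_integrand h z0"
  define u where "u i = X i - z0" for i
  have u0: "u i \<noteq> 0" for i using X unfolding u_def by auto
  have u_lim: "u \<longlonglongrightarrow> 0" unfolding u_def using tendsto_diff[OF X_lim tendsto_const[of z0]] by simp
  obtain D where D: "\<And>i. cmod (u i) \<le> D"
    using convergent_imp_Bseq[OF convergentI[OF u_lim]] by (rule BseqE) blast
  obtain K where K: "\<And>u w. u \<noteq> 0 \<Longrightarrow> cmod u \<le> D \<Longrightarrow>
      norm (?I w * ((exp (complex_of_real \<alpha> * u * cnj w) - 1) / u)) \<le> K * heat_density (1 / 2) z0 w"
    using toeplitz_difference_quotient_dominated[OF h, of D z0] by blast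
  define s where "s i w = ?I w * ((exp (complex_of_real \<alpha> * u i * cnj w) - 1) / u i)" for i w
  have quotient: "(T h (X i) - T h z0) / (X i - z0) = integral\<^sup>L lebesgue (s i)" for i
    using toeplitz_difference_quotient_eq[OF h, of z0 "u i"] unfolding s_def u_def by simp
  have "(\<lambda>i. integral\<^sup>L lebesgue (s i))
      \<longlonglongrightarrow> integral\<^sup>L lebesgue (\<lambda>w. ?I w * (complex_of_real \<alpha> * cnj w))"
  proof (rule integral_dominated_convergence[where w="\<lambda>w. K * heat_density (1 / 2) z0 w"])
    have [measurable]: "?I \<in> borel_measurable lebesgue"
      by (rule toeplitz_integrand_measurable[OF fock_inf_continuous[OF h]])
    have "(\<lambda>w. complex_of_real \<alpha> * cnj w) \<in> borel_measurable lebesgue"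
      by (rule continuous_on_imp_lebesgue_measurable) (intro continuous_intros)
    then show "(\<lambda>w. ?I w * (complex_of_real \<alpha> * cnj w)) \<in> borel_measurable lebesgue"
      by measurable
    show "s i \<in> borel_measurable lebesgue" for i
    proof -
      have "(\<lambda>w. (exp (complex_of_real \<alpha> * u i * cnj w) - 1) / u i) \<in> borel_measurable lebesgue"
        by (rule continuous_on_imp_lebesgue_measurable) (intro continuous_intros; simp add: u0)
      then show ?thesis unfolding s_def[abs_def] by measurable
    qed
    show "integrable lebesgue (\<lambda>w. K * heat_density (1 / 2) z0 w)"
      by (intro integrable_mult_right integrable_heat_density_of_C0) simp
    show "AE w in lebesgue. (\<lambda>i. s i w) \<longlonglongrightarrow> ?I w * (complex_of_real \<alpha> * cnj w)"
    proof (intro AE_I2)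
      fix w
      have "filterlim u (at 0) sequentially"
        by (rule filterlim_atI[OF u_lim]) (simp add: u0)
      from filterlim_compose[OF exp_difference_quotient_tendsto this]
      have "(\<lambda>i. (exp (complex_of_real \<alpha> * cnj w * u i) - 1) / u i) \<longlonglongrightarrow> complex_of_real \<alpha> * cnj w" .
      then show "(\<lambda>i. s i w) \<longlonglongrightarrow> ?I w * (complex_of_real \<alpha> * cnj w)"
        unfolding s_def by (intro tendsto_mult tendsto_const) (simp add: mult_ac)
    qed
    show "AE w in lebesgue. norm (s i w) \<le> K * heat_density (1 / 2) z0 w" for i
      unfolding s_def using K u0 D by simp
  qed
  then show "((\<lambda>y. (T h y - T h z0) / (y - z0)) \<circ> X)
      \<longlonglongrightarrow> integral\<^sup>L lebesgue (\<lambda>w. ?I w * (complex_of_real \<alpha> * cnj w))"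
    by (simp add: o_def quotient)
qed

lemma toeplitz_holomorphic: "h \<in> fock_inf \<alpha> \<Longrightarrow> T h holomorphic_on UNIV"
  using toeplitz_has_field_derivative by (auto simp: holomorphic_on_open)

lemma heat_1_bounded:
  obtains M where "M \<ge> 0" "\<And>z. enn2real (heat 1 z) \<le> M"
proof -
  have "continuous_on UNIV (\<lambda>z. enn2real (heat 1 z))" "((\<lambda>z. enn2real (heat 1 z)) \<longlongrightarrow> 0) at_infinity"
    using heat_C0[of 1] by (simp_all add: in_C0_def)
  then obtain M where "M \<ge> 0" "\<And>z. enn2real (heat 1 z) \<le> M"
    by (rule bounded_of_continuous_vanishing) fast
  then show thesis by (rule that)
qed

lemma toeplitz_weighted_le_heat:
  assumes h: "h \<in> fock_inf \<alpha>"
  shows "cmod (T h z) * exp (- \<alpha> * (cmod z)\<^sup>2 / 2) \<le> fock_inf_norm \<alpha> h * enn2real (heat 1 z)"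
proof -
  have "cmod (T h z) * exp (- \<alpha> * (cmod z)\<^sup>2 / 2)
      \<le> (\<integral>w. cmod (h w) * exp (- \<alpha> * (cmod w)\<^sup>2 / 2) * heat_density 1 z w \<partial>lebesgue)"
    by (rule toeplitz_weighted_le)
  also have "\<dots> \<le> (\<integral>w. fock_inf_norm \<alpha> h * heat_density 1 z w \<partial>lebesgue)"
  proof (rule integral_mono)
    show "integrable lebesgue (\<lambda>w. cmod (h w) * exp (- \<alpha> * (cmod w)\<^sup>2 / 2) * heat_density 1 z w)"
      by (rule integrable_weighted_heat_density[OF h])
    show "integrable lebesgue (\<lambda>w. fock_inf_norm \<alpha> h * heat_density 1 z w)"
      by (intro integrable_mult_right integrable_heat_density_of_C0) simp
    show "cmod (h w) * exp (- \<alpha> * (cmod w)\<^sup>2 / 2) * heat_density 1 z w \<le> fock_inf_norm \<alpha> h * heat_density 1 z w"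
      for w by (rule mult_right_mono[OF fock_inf_norm_upper[OF h] heat_density_nonneg])
  qed
  also have "\<dots> = fock_inf_norm \<alpha> h * enn2real (heat 1 z)"
    by (simp add: heat_eq_integral_of_C0)
  finally show ?thesis .
qed

lemma toeplitz_maps_fock_inf:
  assumes h: "h \<in> fock_inf \<alpha>"
  shows "T h \<in> fock_inf \<alpha>"
proof -
  obtain M where "\<And>z. enn2real (heat 1 z) \<le> M" by (rule heat_1_bounded) fast
  then have "cmod (T h z) * exp (- \<alpha> * (cmod z)\<^sup>2 / 2) \<le> fock_inf_norm \<alpha> h * M" for z
    by (rule order_trans[OF toeplitz_weighted_le_heat[OF h] mult_left_mono[OF _ fock_inf_norm_nonneg[OF h]]])
  then show ?thesis by (rule fock_infI[OF toeplitz_holomorphic[OF h]])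
qed

lemma integrable_heat_density_tail:
  assumes "t > 0"
  shows "integrable lebesgue (\<lambda>w. (if R < cmod w then 1 else 0) * heat_density t z w)"
proof (rule Bochner_Integration.integrable_bound[OF integrable_heat_density_of_C0[OF assms]])
  have [measurable]: "(\<lambda>x::complex. x) \<in> borel_measurable lebesgue"
    by (rule continuous_on_imp_lebesgue_measurable) (rule continuous_on_id)
  show "(\<lambda>w. (if R < cmod w then 1 else 0) * heat_density t z w) \<in> borel_measurable lebesgue"
    by measurable
  show "AE w in lebesgue. norm ((if R < cmod w then 1 else 0) * heat_density t z w) \<le> norm (heat_density t z w)"
    by (intro AE_I2) simp
qed

lemma heat_tail_uniformly_small:
  assumes "\<delta> > 0"
  obtains R where "\<And>z. (\<integral>w. (if R < cmod w then 1 else 0) * heat_density 1 z w \<partial>lebesgue) \<le> \<delta>"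
proof -
  have "((\<lambda>z. enn2real (heat 1 z)) \<longlongrightarrow> 0) at_infinity"
    using heat_C0[of 1] by (simp add: in_C0_def)
  then have "\<forall>\<^sub>F z in at_infinity. dist (enn2real (heat 1 z)) 0 < \<delta>"
    using assms by (rule tendstoD)
  then obtain S0 where S0: "\<And>z. S0 \<le> norm z \<Longrightarrow> dist (enn2real (heat 1 z)) 0 < \<delta>"
    unfolding eventually_at_infinity by blast
  define S where "S = max S0 0"
  have far: "enn2real (heat 1 z) < \<delta>" if "S \<le> cmod z" for z
    using S0[of z] that unfolding S_def by simp
  have "(\<lambda>n. \<integral>w. (if real n < cmod w then 1 else 0) * heat_density (1 / 4) 0 w \<partial>lebesgue) \<longlonglongrightarrow> 0"
    by (rule integral_outside_ball_tendsto_zero[OF integrable_heat_density_of_C0]) simp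
  from order_tendstoD(2)[OF this assms] obtain n1 where n1: "\<And>n. n \<ge> n1 \<Longrightarrow>
      (\<integral>w. (if real n < cmod w then 1 else 0) * heat_density (1 / 4) 0 w \<partial>lebesgue) < \<delta>"
    unfolding eventually_sequentially by blast
  define R where "R = real (n1 + nat \<lceil>2 * S\<rceil>)"
  have R: "2 * S \<le> R" unfolding R_def by linarith
  have tail0: "(\<integral>w. (if R < cmod w then 1 else 0) * heat_density (1 / 4) 0 w \<partial>lebesgue) < \<delta>"
    using n1[of "n1 + nat \<lceil>2 * S\<rceil>"] unfolding R_def by simp
  have "(\<integral>w. (if R < cmod w then 1 else 0) * heat_density 1 z w \<partial>lebesgue) \<le> \<delta>" for z
  proof (cases "S \<le> cmod z")
    case True
    have "(\<integral>w. (if R < cmod w then 1 else 0) * heat_density 1 z w \<partial>lebesgue) \<le> (\<integral>w. heat_density 1 z w \<partial>lebesgue)"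
      by (intro integral_mono integrable_heat_density_tail integrable_heat_density_of_C0)
         (simp_all add: heat_density_nonneg)
    also have "\<dots> < \<delta>" using far[OF True] by (simp add: heat_eq_integral_of_C0)
    finally show ?thesis by simp
  next
    case False
    have "(\<integral>w. (if R < cmod w then 1 else 0) * heat_density 1 z w \<partial>lebesgue)
        \<le> (\<integral>w. (if R < cmod w then 1 else 0) * heat_density (1 / 4) 0 w \<partial>lebesgue)"
    proof (intro integral_mono integrable_heat_density_tail)
      fix w
      show "(if R < cmod w then 1 else 0) * heat_density 1 z w \<le> (if R < cmod w then 1 else 0) * heat_density (1 / 4) 0 w"
        using heat_density_far_le[of z R w] False R by (auto intro: mult_left_mono)
    qed simp_all
    also have "\<dots> < \<delta>" by (rule tail0)
    finally show ?thesis by simp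
  qed
  then show thesis by (rule that)
qed

lemma fock_inf_norm_toeplitz_le_split:
  assumes h: "h \<in> fock_inf \<alpha>" and M: "\<And>z. enn2real (heat 1 z) \<le> M" and "\<eta> \<ge> 0" "C \<ge> 0"
    and split: "\<And>w. cmod (h w) * exp (- \<alpha> * (cmod w)\<^sup>2 / 2) \<le> \<eta> + C * (if R < cmod w then 1 else 0)"
    and tail: "\<And>z. (\<integral>w. (if R < cmod w then 1 else 0) * heat_density 1 z w \<partial>lebesgue) \<le> \<delta>"
  shows "fock_inf_norm \<alpha> (T h) \<le> \<eta> * M + C * \<delta>"
proof (rule fock_inf_norm_le)
  fix z
  let ?tail = "\<lambda>w. (if R < cmod w then 1 else 0) * heat_density 1 z w"
  have "cmod (T h z) * exp (- \<alpha> * (cmod z)\<^sup>2 / 2)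
      \<le> (\<integral>w. cmod (h w) * exp (- \<alpha> * (cmod w)\<^sup>2 / 2) * heat_density 1 z w \<partial>lebesgue)"
    by (rule toeplitz_weighted_le)
  also have "\<dots> \<le> (\<integral>w. \<eta> * heat_density 1 z w + C * ?tail w \<partial>lebesgue)"
  proof (rule integral_mono)
    show "integrable lebesgue (\<lambda>w. cmod (h w) * exp (- \<alpha> * (cmod w)\<^sup>2 / 2) * heat_density 1 z w)"
      by (rule integrable_weighted_heat_density[OF h])
    show "integrable lebesgue (\<lambda>w. \<eta> * heat_density 1 z w + C * ?tail w)"
      by (intro Bochner_Integration.integrable_add integrable_mult_right integrable_heat_density_of_C0
          integrable_heat_density_tail) simp_all
    fix w
    have "cmod (h w) * exp (- \<alpha> * (cmod w)\<^sup>2 / 2) * heat_density 1 z w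
        \<le> (\<eta> + C * (if R < cmod w then 1 else 0)) * heat_density 1 z w"
      by (rule mult_right_mono[OF split heat_density_nonneg])
    then show "cmod (h w) * exp (- \<alpha> * (cmod w)\<^sup>2 / 2) * heat_density 1 z w \<le> \<eta> * heat_density 1 z w + C * ?tail w"
      by (simp add: algebra_simps)
  qed
  also have "\<dots> = \<eta> * enn2real (heat 1 z) + C * (\<integral>w. ?tail w \<partial>lebesgue)"
    by (simp add: heat_eq_integral_of_C0 integrable_heat_density_of_C0 integrable_heat_density_tail)
  also have "\<dots> \<le> \<eta> * M + C * \<delta>"
    using M tail assms(3,4) by (intro add_mono mult_left_mono) auto
  finally show "cmod (T h z) * exp (- \<alpha> * (cmod z)\<^sup>2 / 2) \<le> \<eta> * M + C * \<delta>" .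
qed

theorem compact_if_heat_in_C0: "compact_on_fock_inf \<alpha> T"
  unfolding compact_on_fock_inf_def
proof (intro conjI ballI allI impI)
  fix f assume "f \<in> fock_inf \<alpha>"
  then show "T f \<in> fock_inf \<alpha>" by (rule toeplitz_maps_fock_inf)
next
  fix fs :: "nat \<Rightarrow> complex \<Rightarrow> complex"
  assume fs: "\<forall>n. fs n \<in> fock_inf \<alpha>" and "bdd_above (range (\<lambda>n. fock_inf_norm \<alpha> (fs n)))"
  then obtain C where C: "\<And>n. fock_inf_norm \<alpha> (fs n) \<le> C" by (auto simp: bdd_above_def)
  have C0: "C \<ge> 0" using fock_inf_norm_nonneg[of "fs 0" \<alpha>] fs C[of 0] by simp
  obtain r g where r: "strict_mono r" and g: "g \<in> fock_inf \<alpha>"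
    and g_le: "\<And>w. cmod (g w) * exp (- \<alpha> * (cmod w)\<^sup>2 / 2) \<le> C"
    and uniform: "\<And>K. compact K \<Longrightarrow> uniform_limit K (fs \<circ> r) g sequentially"
    using fock_inf_bounded_seq_subseq[of fs \<alpha> C] fs C by blast
  obtain M where M0: "M \<ge> 0" and M: "\<And>z. enn2real (heat 1 z) \<le> M" by (rule heat_1_bounded) fast
  have "(\<lambda>n. fock_inf_norm \<alpha> (\<lambda>z. T (fs (r n)) z - T g z)) \<longlonglongrightarrow> 0"
  proof (rule LIMSEQ_I)
    fix e :: real assume e: "0 < e"
    define \<eta> where "\<eta> = e / (4 * (M + 1))"
    define \<delta> where "\<delta> = e / (8 * (C + 1))"
    have \<eta>: "\<eta> > 0" "\<eta> * M \<le> e / 4" unfolding \<eta>_def using e M0 by (auto simp: field_simps)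
    have \<delta>: "\<delta> > 0" "2 * C * \<delta> \<le> e / 4" unfolding \<delta>_def using e C0 by (auto simp: field_simps)
    obtain R where tail: "\<And>z. (\<integral>w. (if R < cmod w then 1 else 0) * heat_density 1 z w \<partial>lebesgue) \<le> \<delta>"
      using heat_tail_uniformly_small[OF \<delta>(1)] by blast
    obtain n0 where close: "\<And>n w. n \<ge> n0 \<Longrightarrow> w \<in> cball 0 R \<Longrightarrow> cmod (fs (r n) w - g w) < \<eta>"
      using uniform[of "cball 0 R"] \<eta>(1) unfolding uniform_limit_iff eventually_sequentially dist_norm by force
    have small: "fock_inf_norm \<alpha> (\<lambda>z. T (fs (r n)) z - T g z) \<le> e / 2" if "n \<ge> n0" for n
    proof -
      have fs_le: "cmod (fs (r n) w) * exp (- \<alpha> * (cmod w)\<^sup>2 / 2) \<le> C" for w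
        using fock_inf_norm_upper[of "fs (r n)" \<alpha> w] fs C[of "r n"] by simp
      have split: "cmod (fs (r n) w - g w) * exp (- \<alpha> * (cmod w)\<^sup>2 / 2) \<le> \<eta> + 2 * C * (if R < cmod w then 1 else 0)"
        for w by (rule weighted_diff_le_split[OF _ _ _ fs_le g_le close[OF that]]) (use alpha_pos C0 \<eta> in auto)
      have "fock_inf_norm \<alpha> (T (\<lambda>w. fs (r n) w - g w)) \<le> \<eta> * M + 2 * C * \<delta>"
        using fock_inf_norm_toeplitz_le_split[OF fock_inf_diff M _ _ split tail] fs g \<eta>(1) C0 by simp
      moreover have "(\<lambda>z. T (fs (r n)) z - T g z) = T (\<lambda>w. fs (r n) w - g w)"
        using fs g by (auto intro: toeplitz_diff)
      ultimately show ?thesis using \<eta>(2) \<delta>(2) by simp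
    qed
    have nonneg: "fock_inf_norm \<alpha> (\<lambda>z. T (fs (r n)) z - T g z) \<ge> 0" for n
      using fs g by (intro fock_inf_norm_nonneg fock_inf_diff toeplitz_maps_fock_inf) auto
    show "\<exists>n0. \<forall>n\<ge>n0. norm (fock_inf_norm \<alpha> (\<lambda>z. T (fs (r n)) z - T g z) - 0) < e"
    proof (intro exI allI impI)
      fix n assume "n \<ge> n0"
      then show "norm (fock_inf_norm \<alpha> (\<lambda>z. T (fs (r n)) z - T g z) - 0) < e"
        using small[of n] nonneg[of n] e by simp
    qed
  qed
  then show "\<exists>r g. strict_mono r \<and> g \<in> fock_inf \<alpha> \<and>
      (\<lambda>n. fock_inf_norm \<alpha> (\<lambda>z. T (fs (r n)) z - g z)) \<longlonglongrightarrow> 0"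
    using r toeplitz_maps_fock_inf[OF g] by blast
qed

end

end

theorem theorem4p4:
  fixes \<alpha> :: real and \<phi> :: "complex \<Rightarrow> real"
  assumes "\<alpha> > 0"
    and "\<phi> \<in> borel_measurable lebesgue"
    and "\<And>w. \<phi> w \<ge> 0"
    and "cond_I1 \<alpha> \<phi>"
  shows "compact_on_fock_inf \<alpha> (toeplitz \<alpha> \<phi>) \<longleftrightarrow>
         (\<forall>t>0. in_C0 (heat_transform \<alpha> \<phi> t))"
proof -
  interpret fock_toeplitz \<alpha> \<phi> using assms by unfold_locales
  show ?thesis using heat_in_C0_if_compact compact_if_heat_in_C0 by blast
qed

end
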